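(* Every regular tree language $L\subseteq T^\omega_\Sigma$ that is countable (contains only countably many trees) is unambiguous, i.e. it is accepted by a parity tree automaton $\mathcal{A}$ with $|ACC(\mathcal{A},t)|\le 1$ for every tree $t$.
   Context: $T^\omega_\Sigma$ is the set of functions $t:\{l,r\}^*\to\Sigma$ for a finite alphabet $\Sigma$. A parity tree automaton (PTA) $\mathcal{A}=(Q,\Sigma,Q_I,\delta,\mathbb{C})$ ($Q$ finite, $Q_I\subseteq Q$, $\delta\subseteq Q\times\Sigma\times Q\times Q$, $\mathbb{C}:Q\to\mathbb{N}$) has computations $\phi:\{l,r\}^*\to Q$ on $t$ with $\phi(\epsilon)\in Q_I$, $(\phi(v),t(v),\phi(vl),\phi(vr))\in\delta$ for all $v$, accepting if on every branch the largest color seen infinitely often is even; $ACC(\mathcal{A},t)$ is the set of accepting computations. A tree language is regular if it equals $\{t\mid ACC(\mathcal{A},t)\ne\emptyset\}$ for some PTA $\mathcal{A}$. *)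

theory Defs
  imports Main "HOL-Library.Countable_Set"
begin

datatype dir = Lft | Rgt

type_synonym 'a tree = "dir list \<Rightarrow> 'a"

record 'a pta =
  states :: "nat set"
  initial :: "nat set"
  trans :: "(nat \<times> 'a \<times> nat \<times> nat) set"
  color :: "nat \<Rightarrow> nat"

definition wf_pta :: "'a pta \<Rightarrow> bool" where
  "wf_pta A \<longleftrightarrow> finite (states A) \<and> initial A \<subseteq> states A \<and>
     trans A \<subseteq> states A \<times> UNIV \<times> states A \<times> states A"

definition node :: "(nat \<Rightarrow> dir) \<Rightarrow> nat \<Rightarrow> dir list" where
  "node b n = map b [0..<n]"

definition computation :: "'a pta \<Rightarrow> 'a tree \<Rightarrow> (dir list \<Rightarrow> nat) \<Rightarrow> bool" where
  "computation A t \<phi> \<longleftrightarrow> \<phi> [] \<in> initial A \<and>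
     (\<forall>v. (\<phi> v, t v, \<phi> (v @ [Lft]), \<phi> (v @ [Rgt])) \<in> trans A)"

definition accepting :: "'a pta \<Rightarrow> (dir list \<Rightarrow> nat) \<Rightarrow> bool" where
  "accepting A \<phi> \<longleftrightarrow> (\<forall>b :: nat \<Rightarrow> dir.
     even (Max {c. \<exists>\<^sub>\<infinity>n. color A (\<phi> (node b n)) = c}))"

definition ACC :: "'a pta \<Rightarrow> 'a tree \<Rightarrow> (dir list \<Rightarrow> nat) set" where
  "ACC A t = {\<phi>. computation A t \<phi> \<and> accepting A \<phi>}"

definition lang :: "'a pta \<Rightarrow> 'a tree set" where
  "lang A = {t. ACC A t \<noteq> {}}"

definition regular :: "('a::finite) tree set \<Rightarrow> bool" where
  "regular L \<longleftrightarrow> (\<exists>A. wf_pta A \<and> L = lang A)"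

definition unambiguous :: "('a::finite) tree set \<Rightarrow> bool" where
  "unambiguous L \<longleftrightarrow> (\<exists>A. wf_pta A \<and> L = lang A \<and>
     (\<forall>t. finite (ACC A t) \<and> card (ACC A t) \<le> 1))"

end

theory Submission
  imports Defs "HOL-Library.Sublist" "HOL-Library.Nat_Bijection"
begin

text \<open>Let \<open>A\<close> have \<open>n\<close> states. The key fact is that if \<open>A\<close> accepts \<open>t\<close> from a state with a
  countable language, then every branch of \<open>t\<close> reaches a subtree with at most \<open>n + n\<^sup>2\<close>
  distinct subtrees. Otherwise, either infinitely many subtrees hanging off the branch sit at
  states accepting a second tree (a state accepting a single tree forces at most \<open>n\<close> subtrees),
  and grafting independently at these nodes gives continuum many accepted trees; or, further down,
  there are infinitely many disjoint segments of the branch whose ends carry the same state and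
  after which the letters read eventually differ (equal letters would make the subtree periodic,
  hence with few subtrees), and repeating any subset of these segments again gives continuum many
  distinct accepted trees.

  As there are only finitely many trees with at most \<open>n + n\<^sup>2\<close> subtrees, a new automaton can
  spell such a subtree out deterministically, and above it label each node by the exact set of
  states of \<open>A\<close> accepting the subtree there. Giving the latter labels odd colour forces every
  branch of an accepting run to end in spelling mode, and then the run is determined by the tree.\<close>

section \<open>Trees, subtrees and branches\<close>

definition subtree :: "(dir list \<Rightarrow> 'b) \<Rightarrow> dir list \<Rightarrow> dir list \<Rightarrow> 'b" where
  "subtree t v = (\<lambda>u. t (v @ u))"

definition subtrees :: "'a tree \<Rightarrow> 'a tree set" where
  "subtrees t = range (subtree t)"

definition regular_tree :: "nat \<Rightarrow> 'a tree \<Rightarrow> bool" where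
  "regular_tree K t \<longleftrightarrow> finite (subtrees t) \<and> card (subtrees t) \<le> K"

lemma subtree_apply: "subtree t v u = t (v @ u)"
  by (simp add: subtree_def)

lemma subtree_Nil [simp]: "subtree t [] = t"
  by (simp add: subtree_def)

lemma subtree_root [simp]: "subtree t v [] = t v"
  by (simp add: subtree_def)

lemma subtree_subtree [simp]: "subtree (subtree t v) w = subtree t (v @ w)"
  by (simp add: subtree_def)

lemma tree_eq_if_root_children:
  assumes "s [] = s' []" "subtree s [Lft] = subtree s' [Lft]" "subtree s [Rgt] = subtree s' [Rgt]"
  shows "s = s'"
proof
  fix u show "s u = s' u"
  proof (cases u)
    case Nil then show ?thesis using assms(1) by simp
  next
    case (Cons d u')
    then show ?thesis using assms(2,3) by (cases d) (auto simp: subtree_def fun_eq_iff)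
  qed
qed

fun flip :: "dir \<Rightarrow> dir" where
  "flip Lft = Rgt" | "flip Rgt = Lft"

lemma eq_flip_iff: "d = flip d' \<longleftrightarrow> d \<noteq> d'"
  by (cases d; cases d') auto

lemma flip_neq [simp]: "flip d \<noteq> d" "d \<noteq> flip d"
  by (cases d; simp)+

lemma UNIV_dir: "(UNIV :: dir set) = {Lft, Rgt}"
  using dir.exhaust by auto

instance dir :: finite
  by standard (simp add: UNIV_dir)

lemma length_node [simp]: "length (node b n) = n"
  by (simp add: node_def)

lemma node_0 [simp]: "node b 0 = []"
  by (simp add: node_def)

lemma node_Suc: "node b (Suc n) = node b n @ [b n]"
  by (simp add: node_def)

lemma node_Suc_Cons: "node b (Suc n) = b 0 # node (\<lambda>i. b (Suc i)) n"
  unfolding node_def by (simp add: map_upt_Suc del: upt_Suc)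

lemma node_add: "node b (n + m) = node b n @ node (\<lambda>i. b (n + i)) m"
  by (induction m) (simp_all add: node_Suc)

lemma take_node: "k \<le> n \<Longrightarrow> take k (node b n) = node b k"
  by (simp add: node_def take_map)

lemma node_extends: "k \<le> n \<Longrightarrow> \<exists>z. node b n = node b k @ z"
  using node_add[of b k "n - k"] by auto

lemma prefix_node: "prefix w (node b m) \<Longrightarrow> w = node b (length w)"
  by (metis prefix_def append_eq_conv_conj prefix_length_le take_node length_node)

definition branch_through :: "dir list \<Rightarrow> (nat \<Rightarrow> dir) \<Rightarrow> nat \<Rightarrow> dir" where
  "branch_through v b = (\<lambda>i. if i < length v then v ! i else b (i - length v))"

lemma node_branch_through: "node (branch_through v b) (length v + n) = v @ node b n"
proof -
  have "node (branch_through v b) (length v) = v"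
    by (rule nth_equalityI) (auto simp: node_def branch_through_def)
  moreover have "node (\<lambda>i. branch_through v b (length v + i)) n = node b n"
    unfolding node_def branch_through_def by (intro map_cong) auto
  ultimately show ?thesis by (simp add: node_add)
qed

lemma subtree_node_extends:
  assumes "k \<le> n"
  obtains z where "subtree t (node b n) = subtree (subtree t (node b k)) z"
proof -
  obtain z where "node b n = node b k @ z" using node_extends[OF assms] by blast
  then show ?thesis using that by simp
qed


section \<open>Colours seen infinitely often\<close>

definition inf_values :: "(nat \<Rightarrow> nat) \<Rightarrow> nat set" where
  "inf_values f = {c. \<exists>\<^sub>\<infinity>n. f n = c}"

definition even_parity :: "(nat \<Rightarrow> nat) \<Rightarrow> bool" where
  "even_parity f \<longleftrightarrow> even (Max (inf_values f))"

lemma accepting_iff_even_parity: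
  "accepting A \<phi> \<longleftrightarrow> (\<forall>b. even_parity (\<lambda>n. color A (\<phi> (node b n))))"
  unfolding accepting_def even_parity_def inf_values_def by simp

lemma INFM_nat_shift: "(\<exists>\<^sub>\<infinity>n. P (n + k)) \<longleftrightarrow> (\<exists>\<^sub>\<infinity>n::nat. P n)"
  unfolding cofinite_eq_sequentially frequently_def
  using eventually_sequentially_seg[of "\<lambda>n. \<not> P n" k] by simp

lemma inf_values_shift_eq:
  assumes "\<forall>n\<ge>n1. f (n + c1) = g (n + c2)"
  shows "inf_values f = inf_values g"
proof -
  have "(\<exists>\<^sub>\<infinity>n. f n = c) \<longleftrightarrow> (\<exists>\<^sub>\<infinity>n. g n = c)" for c
  proof -
    have "(\<exists>\<^sub>\<infinity>n. f (n + c1) = c) \<longleftrightarrow> (\<exists>\<^sub>\<infinity>n. g (n + c2) = c)"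
      unfolding cofinite_eq_sequentially
      by (rule frequently_cong[of "\<lambda>n. n \<ge> n1"]) (use assms in \<open>auto simp: eventually_ge_at_top\<close>)
    then show ?thesis
      using INFM_nat_shift[of "\<lambda>n. f n = c" c1] INFM_nat_shift[of "\<lambda>n. g n = c" c2] by blast
  qed
  then show ?thesis unfolding inf_values_def by blast
qed

lemma even_parity_shift_eq:
  "\<forall>n\<ge>n1. f (n + c1) = g (n + c2) \<Longrightarrow> even_parity f \<longleftrightarrow> even_parity g"
  unfolding even_parity_def using inf_values_shift_eq by metis

lemma even_parity_eventually_const:
  assumes "\<forall>n\<ge>m. f n = k"
  shows "even_parity f \<longleftrightarrow> even k"
proof -
  have "inf_values f = inf_values (\<lambda>_. k)"
    using assms by (intro inf_values_shift_eq[of m _ 0 _ 0]) simp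
  also have "\<dots> = {k}" unfolding inf_values_def by auto
  finally show ?thesis unfolding even_parity_def by simp
qed

lemma inf_values_finite_range:
  assumes "range f \<subseteq> S" "finite S"
  shows "finite (inf_values f)" "inf_values f \<noteq> {}"
proof -
  have "inf_values f \<subseteq> S"
    unfolding inf_values_def using assms(1) by (blast dest: INFM_EX)
  then show "finite (inf_values f)" using assms(2) finite_subset by blast
  have "\<exists>\<^sub>\<infinity>n. \<exists>c\<in>S. f n = c" using assms(1) by (auto simp: INFM_nat)
  then have "\<exists>c\<in>S. \<exists>\<^sub>\<infinity>n. f n = c"
    using INFM_finite_Bex_distrib[OF assms(2), of "\<lambda>c n. f n = c"] by simp
  then show "inf_values f \<noteq> {}" unfolding inf_values_def by auto
qed

lemma eventually_in_inf_values:
  assumes "range f \<subseteq> S" "finite S"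
  shows "\<exists>N. \<forall>n\<ge>N. f n \<in> inf_values f"
proof -
  have "finite {n. f n = c}" if "c \<notin> inf_values f" for c
    using that unfolding inf_values_def by (simp add: INFM_iff_infinite)
  then have "finite (\<Union>c\<in>S - inf_values f. {n. f n = c})" using assms(2) by auto
  then obtain N where N: "(\<Union>c\<in>S - inf_values f. {n. f n = c}) \<subseteq> {..<N}"
    using finite_nat_bounded by blast
  have "f n \<in> inf_values f" if "n \<ge> N" for n
  proof (rule ccontr)
    assume "f n \<notin> inf_values f"
    then have "n \<in> (\<Union>c\<in>S - inf_values f. {n. f n = c})" using assms(1) by auto
    then show False using N that by auto
  qed
  then show ?thesis by blast
qed


section \<open>Runs from a state\<close>

definition run_from :: "'a pta \<Rightarrow> nat \<Rightarrow> 'a tree \<Rightarrow> (dir list \<Rightarrow> nat) \<Rightarrow> bool" where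
  "run_from A q t \<phi> \<longleftrightarrow> \<phi> [] = q \<and>
     (\<forall>v. (\<phi> v, t v, \<phi> (v @ [Lft]), \<phi> (v @ [Rgt])) \<in> trans A)"

definition lang_from :: "'a pta \<Rightarrow> nat \<Rightarrow> 'a tree set" where
  "lang_from A q = {t. \<exists>\<phi>. run_from A q t \<phi> \<and> accepting A \<phi>}"

lemma computation_iff_run_from:
  "computation A t \<phi> \<longleftrightarrow> \<phi> [] \<in> initial A \<and> run_from A (\<phi> []) t \<phi>"
  unfolding computation_def run_from_def by auto

lemma lang_eq_UN_lang_from: "lang A = (\<Union>q\<in>initial A. lang_from A q)"
  unfolding lang_def ACC_def lang_from_def computation_iff_run_from
  by (fastforce simp: run_from_def)

lemma run_from_subtree:
  assumes "run_from A q t \<phi>"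
  shows "run_from A (\<phi> v) (subtree t v) (subtree \<phi> v)"
  using assms unfolding run_from_def subtree_def by (metis append.assoc append_Nil2)

lemma accepting_subtree:
  assumes "accepting A \<phi>"
  shows "accepting A (subtree \<phi> v)"
  unfolding accepting_iff_even_parity
proof
  fix b
  have "even_parity (\<lambda>n. color A (\<phi> (node (branch_through v b) n)))"
    using assms unfolding accepting_iff_even_parity by blast
  moreover have "subtree \<phi> v (node b (n + 0)) = \<phi> (node (branch_through v b) (n + length v))" for n
    using node_branch_through[of v b n] by (simp add: subtree_def add.commute)
  ultimately show "even_parity (\<lambda>n. color A (subtree \<phi> v (node b n)))"
    using even_parity_shift_eq[of 0 "\<lambda>n. color A (subtree \<phi> v (node b n))" 0
        "\<lambda>n. color A (\<phi> (node (branch_through v b) n))" "length v"] by simp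
qed

lemma subtree_in_lang_from:
  assumes "run_from A q t \<phi>" "accepting A \<phi>"
  shows "subtree t v \<in> lang_from A (\<phi> v)"
  using run_from_subtree[OF assms(1)] accepting_subtree[OF assms(2)] unfolding lang_from_def by blast

lemma run_from_in_states:
  assumes "wf_pta A" "run_from A q t \<phi>" "q \<in> states A"
  shows "\<phi> v \<in> states A"
proof (induction v rule: rev_induct)
  case Nil
  then show ?case using assms(2,3) by (simp add: run_from_def)
next
  case (snoc d v)
  have "(\<phi> v, t v, \<phi> (v @ [Lft]), \<phi> (v @ [Rgt])) \<in> trans A"
    using assms(2) by (simp add: run_from_def)
  then have "\<phi> (v @ [Lft]) \<in> states A \<and> \<phi> (v @ [Rgt]) \<in> states A"
    using assms(1) unfolding wf_pta_def by blast
  then show ?case by (cases d) auto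
qed

lemma run_from_Cons:
  assumes "(q, t [], q1, q2) \<in> trans A"
    and "run_from A q1 (subtree t [Lft]) \<psi>1" and "run_from A q2 (subtree t [Rgt]) \<psi>2"
  shows "run_from A q t (\<lambda>u. case u of [] \<Rightarrow> q | Lft # u' \<Rightarrow> \<psi>1 u' | Rgt # u' \<Rightarrow> \<psi>2 u')"
  unfolding run_from_def
proof (intro conjI allI)
  fix v
  show "((case v of [] \<Rightarrow> q | Lft # u' \<Rightarrow> \<psi>1 u' | Rgt # u' \<Rightarrow> \<psi>2 u'), t v,
      (case v @ [Lft] of [] \<Rightarrow> q | Lft # u' \<Rightarrow> \<psi>1 u' | Rgt # u' \<Rightarrow> \<psi>2 u'),
      (case v @ [Rgt] of [] \<Rightarrow> q | Lft # u' \<Rightarrow> \<psi>1 u' | Rgt # u' \<Rightarrow> \<psi>2 u')) \<in> trans A"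
  proof (cases v)
    case Nil
    then show ?thesis using assms by (simp add: run_from_def)
  next
    case (Cons d v')
    then show ?thesis using assms(2,3) by (cases d) (auto simp: run_from_def subtree_def)
  qed
qed simp

lemma accepting_Cons:
  assumes "accepting A \<psi>1" "accepting A \<psi>2"
  shows "accepting A (\<lambda>u. case u of [] \<Rightarrow> q | Lft # u' \<Rightarrow> \<psi>1 u' | Rgt # u' \<Rightarrow> \<psi>2 u')"
    (is "accepting A ?\<phi>")
  unfolding accepting_iff_even_parity
proof
  fix b :: "nat \<Rightarrow> dir"
  define \<psi> where "\<psi> = (case b 0 of Lft \<Rightarrow> \<psi>1 | Rgt \<Rightarrow> \<psi>2)"
  have "even_parity (\<lambda>n. color A (\<psi> (node (\<lambda>i. b (Suc i)) n)))"
    using assms unfolding accepting_iff_even_parity \<psi>_def by (cases "b 0") auto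
  moreover have "?\<phi> (node b (n + 1)) = \<psi> (node (\<lambda>i. b (Suc i)) (n + 0))" for n
    by (cases "b 0") (simp_all add: node_Suc_Cons \<psi>_def)
  ultimately show "even_parity (\<lambda>n. color A (?\<phi> (node b n)))"
    using even_parity_shift_eq[of 0 "\<lambda>n. color A (?\<phi> (node b n))" 1
        "\<lambda>n. color A (\<psi> (node (\<lambda>i. b (Suc i)) n))" 0] by simp
qed

lemma lang_from_iff_children:
  "t \<in> lang_from A q \<longleftrightarrow> (\<exists>q1 q2. (q, t [], q1, q2) \<in> trans A \<and>
     subtree t [Lft] \<in> lang_from A q1 \<and> subtree t [Rgt] \<in> lang_from A q2)"
proof
  assume "t \<in> lang_from A q"
  then obtain \<phi> where run: "run_from A q t \<phi>" and acc: "accepting A \<phi>"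
    unfolding lang_from_def by blast
  have "(q, t [], \<phi> [Lft], \<phi> [Rgt]) \<in> trans A"
    using run unfolding run_from_def by (metis append_Nil)
  then show "\<exists>q1 q2. (q, t [], q1, q2) \<in> trans A \<and>
      subtree t [Lft] \<in> lang_from A q1 \<and> subtree t [Rgt] \<in> lang_from A q2"
    using subtree_in_lang_from[OF run acc] by blast
next
  assume "\<exists>q1 q2. (q, t [], q1, q2) \<in> trans A \<and>
      subtree t [Lft] \<in> lang_from A q1 \<and> subtree t [Rgt] \<in> lang_from A q2"
  then obtain q1 q2 \<psi>1 \<psi>2 where "(q, t [], q1, q2) \<in> trans A"
    and "run_from A q1 (subtree t [Lft]) \<psi>1" "accepting A \<psi>1"
    and "run_from A q2 (subtree t [Rgt]) \<psi>2" "accepting A \<psi>2"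
    unfolding lang_from_def by blast
  then show "t \<in> lang_from A q"
    unfolding lang_from_def using run_from_Cons accepting_Cons by blast
qed


section \<open>Grafting along an antichain\<close>

definition prefix_antichain :: "dir list set \<Rightarrow> bool" where
  "prefix_antichain W \<longleftrightarrow> (\<forall>w\<in>W. \<forall>w'\<in>W. prefix w w' \<longrightarrow> w = w')"

definition graft :: "dir list set \<Rightarrow> (dir list \<Rightarrow> 'b) \<Rightarrow> (dir list \<Rightarrow> dir list \<Rightarrow> 'b) \<Rightarrow> dir list \<Rightarrow> 'b" where
  "graft W t s u = (if \<exists>w\<in>W. prefix w u
      then s (THE w. w \<in> W \<and> prefix w u) (drop (length (THE w. w \<in> W \<and> prefix w u)) u)
      else t u)"

lemma graft_in:
  assumes "prefix_antichain W" "w \<in> W"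
  shows "graft W t s (w @ z) = s w z"
proof -
  have "(THE w'. w' \<in> W \<and> prefix w' (w @ z)) = w"
  proof (rule the_equality)
    show "w \<in> W \<and> prefix w (w @ z)" using assms(2) by simp
    fix w' assume "w' \<in> W \<and> prefix w' (w @ z)"
    then have "prefix w' w \<or> prefix w w'"
      using prefix_same_cases[of w' "w @ z" w] by simp
    then show "w' = w" using assms \<open>w' \<in> W \<and> _\<close> unfolding prefix_antichain_def by metis
  qed
  then show ?thesis using assms(2) unfolding graft_def by auto
qed

lemma graft_out: "\<not> (\<exists>w\<in>W. prefix w u) \<Longrightarrow> graft W t s u = t u"
  unfolding graft_def by auto

lemma subtree_graft_in:
  assumes "prefix_antichain W" "w \<in> W"
  shows "subtree (graft W t s) w = s w"
  by (simp add: subtree_def fun_eq_iff graft_in[OF assms])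

locale graft_runs =
  fixes A :: "'a pta" and q :: nat and t :: "'a tree" and \<phi> :: "dir list \<Rightarrow> nat"
    and W :: "dir list set" and s :: "dir list \<Rightarrow> 'a tree" and \<psi> :: "dir list \<Rightarrow> dir list \<Rightarrow> nat"
  assumes run: "run_from A q t \<phi>" and acc: "accepting A \<phi>" and antichain: "prefix_antichain W"
    and run_at: "\<And>w. w \<in> W \<Longrightarrow> run_from A (\<phi> w) (s w) (\<psi> w)"
    and acc_at: "\<And>w. w \<in> W \<Longrightarrow> accepting A (\<psi> w)"
begin

lemma graft_child_outside:
  assumes "\<not> (\<exists>w\<in>W. prefix w v)"
  shows "graft W \<phi> \<psi> (v @ [d]) = \<phi> (v @ [d])"
proof (cases "\<exists>w\<in>W. prefix w (v @ [d])")
  case True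
  then obtain w where w: "w \<in> W" "prefix w (v @ [d])" by blast
  then have "w = v @ [d]" using assms by (auto simp: prefix_snoc)
  then have "graft W \<phi> \<psi> (v @ [d]) = \<psi> w []" using graft_in[OF antichain w(1), of \<phi> \<psi> "[]"] by simp
  also have "\<dots> = \<phi> w" using run_at[OF w(1)] by (simp add: run_from_def)
  finally show ?thesis using \<open>w = v @ [d]\<close> by simp
qed (simp add: graft_out)

lemma run_from_graft: "run_from A q (graft W t s) (graft W \<phi> \<psi>)"
  unfolding run_from_def
proof (intro conjI allI)
  show "graft W \<phi> \<psi> [] = q"
  proof (cases "[] \<in> W")
    case True
    then show ?thesis
      using graft_in[OF antichain True, of \<phi> \<psi> "[]"] run_at[OF True] run by (simp add: run_from_def)
  qed (use run in \<open>simp add: graft_out run_from_def\<close>)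
  fix v
  show "(graft W \<phi> \<psi> v, graft W t s v, graft W \<phi> \<psi> (v @ [Lft]), graft W \<phi> \<psi> (v @ [Rgt])) \<in> trans A"
  proof (cases "\<exists>w\<in>W. prefix w v")
    case True
    then obtain w z where w: "w \<in> W" "v = w @ z" by (auto simp: prefix_def)
    have "(\<psi> w z, s w z, \<psi> w (z @ [Lft]), \<psi> w (z @ [Rgt])) \<in> trans A"
      using run_at[OF w(1)] by (simp add: run_from_def)
    then show ?thesis using w graft_in[OF antichain w(1)] by (metis append.assoc)
  next
    case False
    then show ?thesis using run graft_child_outside[OF False] by (simp add: graft_out run_from_def)
  qed
qed

lemma accepting_graft: "accepting A (graft W \<phi> \<psi>)"
  unfolding accepting_iff_even_parity
proof
  fix b
  show "even_parity (\<lambda>n. color A (graft W \<phi> \<psi> (node b n)))"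
  proof (cases "\<exists>n. node b n \<in> W")
    case True
    then obtain n where n: "node b n \<in> W" by blast
    have "even_parity (\<lambda>m. color A (\<psi> (node b n) (node (\<lambda>i. b (n + i)) m)))"
      using acc_at[OF n] unfolding accepting_iff_even_parity by blast
    moreover have "graft W \<phi> \<psi> (node b (m + n)) = \<psi> (node b n) (node (\<lambda>i. b (n + i)) (m + 0))" for m
      using graft_in[OF antichain n] node_add[of b n m] by (simp add: add.commute)
    ultimately show ?thesis
      using even_parity_shift_eq[of 0 "\<lambda>m. color A (graft W \<phi> \<psi> (node b m))" n
          "\<lambda>m. color A (\<psi> (node b n) (node (\<lambda>i. b (n + i)) m))" 0] by simp
  next
    case False
    then have "graft W \<phi> \<psi> (node b m) = \<phi> (node b m)" for m
      using prefix_node by (metis graft_out)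
    then show ?thesis using acc unfolding accepting_iff_even_parity by simp
  qed
qed

lemma graft_in_lang_from: "graft W t s \<in> lang_from A q"
  using run_from_graft accepting_graft unfolding lang_from_def by blast

end


section \<open>Trees with boundedly many subtrees\<close>

lemma subtree_in_subtrees: "subtree s v \<in> subtrees s"
  unfolding subtrees_def by auto

lemma regular_tree_subtree: "regular_tree K s \<Longrightarrow> regular_tree K (subtree s v)"
proof -
  have "subtrees (subtree s v) \<subseteq> subtrees s"
    unfolding subtrees_def by auto
  then show "regular_tree K s \<Longrightarrow> regular_tree K (subtree s v)"
    unfolding regular_tree_def by (meson card_mono finite_subset le_trans)
qed

lemma regular_tree_mono: "K \<le> K' \<Longrightarrow> regular_tree K s \<Longrightarrow> regular_tree K' s"
  unfolding regular_tree_def by auto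

lemma repeated_subtree_pair:
  assumes "regular_tree K s" "regular_tree K s'" "K * K < length u"
  obtains i j where "i < j" "j \<le> length u"
    "subtree s (take i u) = subtree s (take j u)" "subtree s' (take i u) = subtree s' (take j u)"
proof -
  define f where "f i = (subtree s (take i u), subtree s' (take i u))" for i
  have maps: "f ` {0..length u} \<subseteq> subtrees s \<times> subtrees s'"
    unfolding f_def by (auto simp: subtree_in_subtrees)
  have fin: "finite (subtrees s \<times> subtrees s')" and card: "card (subtrees s \<times> subtrees s') \<le> K * K"
    using assms(1,2) unfolding regular_tree_def by (auto simp: card_cartesian_product mult_le_mono)
  have "\<not> inj_on f {0..length u}"
  proof
    assume "inj_on f {0..length u}"
    then have "card {0..length u} \<le> card (subtrees s \<times> subtrees s')"
      using card_inj_on_le[OF _ maps fin] by blast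
    then show False using card assms(3) by simp
  qed
  then obtain i j where "i \<in> {0..length u}" "j \<in> {0..length u}" "f i = f j" "i \<noteq> j"
    unfolding inj_on_def by blast
  then consider "i < j" "j \<le> length u" "f i = f j" | "j < i" "i \<le> length u" "f j = f i"
    by fastforce
  then show ?thesis using that unfolding f_def by (cases; blast)
qed

text \<open>Two trees with at most \<open>K\<close> subtrees each are determined by their nodes of depth \<open>\<le> K\<^sup>2\<close>:
  a longer node \<open>u\<close> contains a segment between two positions at which both trees have the same
  pair of subtrees, and cutting it out shortens \<open>u\<close>.\<close>
lemma regular_tree_eq_if_agree:
  assumes "regular_tree K s" "regular_tree K s'" "\<forall>u. length u \<le> K * K \<longrightarrow> s u = s' u"
  shows "s = s'"
proof
  fix u
  show "s u = s' u"
  proof (induction "length u" arbitrary: u rule: less_induct)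
    case less
    show ?case
    proof (cases "length u \<le> K * K")
      case False
      then have "K * K < length u" by simp
      then obtain i j where ij: "i < j" "j \<le> length u"
        "subtree s (take i u) = subtree s (take j u)" "subtree s' (take i u) = subtree s' (take j u)"
        by (rule repeated_subtree_pair[OF assms(1,2)])
      define u' where "u' = take i u @ drop j u"
      have "s u = subtree s (take j u) (drop j u)" "s' u = subtree s' (take j u) (drop j u)"
        by (simp_all add: subtree_apply)
      then have "s u = s u'" "s' u = s' u'"
        unfolding ij(3,4)[symmetric] by (simp_all add: subtree_apply u'_def)
      moreover have "length u' < length u" using ij(1,2) by (simp add: u'_def)
      ultimately show ?thesis using less by metis
    next
      case True
      then show ?thesis using assms(3) by blast
    qed
  qed
qed

lemma finite_regular_trees: "finite {s :: ('a::finite) tree. regular_tree K s}"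
proof -
  define U where "U = {xs :: dir list. set xs \<subseteq> UNIV \<and> length xs \<le> K * K}"
  define restrict where "restrict s = (\<lambda>u. if u \<in> U then s u else undefined)" for s :: "'a tree"
  have "finite U" unfolding U_def by (rule finite_lists_length_le) simp
  then have "finite {f :: 'a tree. \<forall>x. (x \<in> U \<longrightarrow> f x \<in> UNIV) \<and> (x \<notin> U \<longrightarrow> f x = undefined)}"
    by (intro finite_set_of_finite_funs) auto
  moreover have "restrict ` {s. regular_tree K s} \<subseteq> {f. \<forall>x. (x \<in> U \<longrightarrow> f x \<in> UNIV) \<and> (x \<notin> U \<longrightarrow> f x = undefined)}"
    unfolding restrict_def by auto
  moreover have "inj_on restrict {s. regular_tree K s}"
  proof (rule inj_onI)
    fix s s' assume "s \<in> {s. regular_tree K s}" "s' \<in> {s. regular_tree K s}" "restrict s = restrict s'"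
    then show "s = s'"
      using regular_tree_eq_if_agree[of K s s'] unfolding restrict_def U_def by (auto simp: fun_eq_iff) metis
  qed
  ultimately show ?thesis by (meson finite_imageD finite_subset)
qed

lemma many_distinct_subtrees:
  assumes "\<not> regular_tree K s"
  obtains V where "finite V" "card V = Suc K" "inj_on (subtree s) V"
proof -
  obtain F where F: "F \<subseteq> subtrees s" "finite F" "card F = Suc K"
  proof (cases "finite (subtrees s)")
    case True
    then have "Suc K \<le> card (subtrees s)" using assms unfolding regular_tree_def by auto
    then show ?thesis using obtain_subset_with_card_n that by metis
  next
    case False
    then show ?thesis using infinite_arbitrarily_large that by metis
  qed
  then obtain V where V: "inj_on (subtree s) V" "F = subtree s ` V"
    unfolding subtrees_def subset_image_inj by blast
  then show ?thesis using that F by (simp add: card_image finite_image_iff)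
qed

lemma not_regular_tree_witness_depth:
  assumes "\<not> regular_tree K s"
  obtains D where "\<And>s'. (\<forall>u. length u < D \<longrightarrow> s' u = s u) \<Longrightarrow> \<not> regular_tree K s'"
proof -
  obtain V where V: "finite V" "card V = Suc K" "inj_on (subtree s) V"
    using many_distinct_subtrees[OF assms] .
  have "\<exists>u. s (v @ u) \<noteq> s (v' @ u)" if "v \<in> V" "v' \<in> V" "v \<noteq> v'" for v v'
    using inj_onD[OF V(3) _ that(1,2)] that(3) by (auto simp: subtree_def fun_eq_iff)
  then obtain wit where wit: "\<And>v v'. v \<in> V \<Longrightarrow> v' \<in> V \<Longrightarrow> v \<noteq> v' \<Longrightarrow> s (v @ wit v v') \<noteq> s (v' @ wit v v')"
    by metis
  define D where "D = Suc (Max ((\<lambda>(v, v'). max (length v) (length v') + length (wit v v')) ` (V \<times> V)))"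
  have bound: "max (length v) (length v') + length (wit v v') < D" if "v \<in> V" "v' \<in> V" for v v'
    unfolding D_def using V(1) that by (auto intro!: le_imp_less_Suc Max_ge)
  show ?thesis
  proof (rule that)
    fix s' :: "'a tree" assume agree: "\<forall>u. length u < D \<longrightarrow> s' u = s u"
    have "inj_on (subtree s') V"
    proof (rule inj_onI, rule ccontr)
      fix v v' assume vv: "v \<in> V" "v' \<in> V" "subtree s' v = subtree s' v'" "v \<noteq> v'"
      have "s' (v @ wit v v') = s' (v' @ wit v v')" using vv(3) by (metis subtree_apply)
      then show False using wit[OF vv(1,2,4)] agree bound[OF vv(1,2)] by auto
    qed
    then have "card (subtree s' ` V) = Suc K" using V(2) by (simp add: card_image)
    moreover have "subtree s' ` V \<subseteq> subtrees s'" unfolding subtrees_def by auto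
    ultimately show "\<not> regular_tree K s'"
      unfolding regular_tree_def by (metis card_mono not_less_eq_eq)
  qed
qed


section \<open>Sources of uncountably many accepted trees\<close>

lemma uncountable_UNIV_nat_bool: "uncountable (UNIV :: (nat \<Rightarrow> bool) set)"
proof
  assume "countable (UNIV :: (nat \<Rightarrow> bool) set)"
  then obtain g :: "(nat \<Rightarrow> bool) \<Rightarrow> nat" where g: "inj g" by (auto simp: countable_def)
  have "X \<in> range (\<lambda>n. {m. inv g n m})" for X :: "nat set"
  proof (rule image_eqI)
    show "X = {m. inv g (g (\<lambda>m. m \<in> X)) m}" using g by simp
  qed simp
  then have "range (\<lambda>n. {m. inv g n m}) = Pow UNIV" by blast
  then show False using Cantors_theorem by blast
qed

lemma uncountable_if_inj_Cantor:
  assumes "inj (F :: (nat \<Rightarrow> bool) \<Rightarrow> 'b)" "range F \<subseteq> S"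
  shows "uncountable S"
  using assms countable_image_inj_on[of F UNIV] countable_subset uncountable_UNIV_nat_bool by blast

lemma prefix_antichain_singleton: "prefix_antichain {w}"
  unfolding prefix_antichain_def by auto

lemma prefix_antichain_subset: "prefix_antichain W \<Longrightarrow> V \<subseteq> W \<Longrightarrow> prefix_antichain V"
  unfolding prefix_antichain_def by blast

lemma subtree_graft_outside:
  assumes "prefix_antichain W" "V \<subseteq> W" "w \<in> W" "w \<notin> V"
  shows "subtree (graft V t s) w = subtree t w"
proof -
  have "\<not> (\<exists>v\<in>V. prefix v (w @ z))" for z
  proof
    assume "\<exists>v\<in>V. prefix v (w @ z)"
    then obtain v where v: "v \<in> V" "prefix v (w @ z)" by blast
    then have "prefix v w \<or> prefix w v" using prefix_same_cases[of v "w @ z" w] by simp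
    then have "v = w" using assms(1,2,3) v(1) unfolding prefix_antichain_def by blast
    then show False using assms(4) v(1) by simp
  qed
  then show ?thesis by (simp add: subtree_def graft_out)
qed

text \<open>If a state accepts only one tree, then the subtree of that tree at a node is determined by
  the state of the run there: otherwise grafting would produce a second accepted tree.\<close>
lemma regular_tree_if_lang_from_singleton:
  assumes wf: "wf_pta A" and run: "run_from A q t \<phi>" and acc: "accepting A \<phi>"
    and q: "q \<in> states A" and single: "lang_from A q \<subseteq> {t}"
  shows "regular_tree (card (states A)) t"
proof -
  have eq: "subtree t w = subtree t w'" if "\<phi> w = \<phi> w'" for w w'
  proof -
    interpret graft_runs A q t \<phi> "{w}" "\<lambda>_. subtree t w'" "\<lambda>_. subtree \<phi> w'"
    proof
      show "run_from A q t \<phi>" "accepting A \<phi>" "prefix_antichain {w}"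
        by (fact run acc prefix_antichain_singleton)+
      fix x assume "x \<in> {w}"
      then show "run_from A (\<phi> x) (subtree t w') (subtree \<phi> w')"
        using run_from_subtree[OF run, of w'] that by simp
      show "accepting A (subtree \<phi> w')" by (rule accepting_subtree[OF acc])
    qed
    have "graft {w} t (\<lambda>_. subtree t w') = t" using graft_in_lang_from single by blast
    then have "subtree t w = subtree (graft {w} t (\<lambda>_. subtree t w')) w" by simp
    also have "\<dots> = subtree t w'" by (rule subtree_graft_in[OF prefix_antichain_singleton singletonI])
    finally show ?thesis .
  qed
  define g where "g p = subtree t (SOME w. \<phi> w = p)" for p
  have "subtree t w = g (\<phi> w)" for w
  proof -
    have "\<phi> w = \<phi> (SOME w'. \<phi> w' = \<phi> w)" using someI[of "\<lambda>w'. \<phi> w' = \<phi> w" w] by simp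
    then show ?thesis unfolding g_def by (rule eq)
  qed
  note g = this
  have sub: "subtrees t \<subseteq> g ` states A"
  proof
    fix x assume "x \<in> subtrees t"
    then obtain w where "x = subtree t w" unfolding subtrees_def by blast
    then show "x \<in> g ` states A" using g run_from_in_states[OF wf run q] by blast
  qed
  have fin: "finite (g ` states A)" using wf unfolding wf_pta_def by simp
  have "card (subtrees t) \<le> card (g ` states A)" by (rule card_mono[OF fin sub])
  also have "\<dots> \<le> card (states A)" by (rule card_image_le) (use wf in \<open>simp add: wf_pta_def\<close>)
  finally show ?thesis unfolding regular_tree_def using finite_subset[OF sub fin] by blast
qed

lemma prefix_antichain_selected: "prefix_antichain (range W) \<Longrightarrow> prefix_antichain (W ` {n. \<sigma> n})"
  by (rule prefix_antichain_subset) auto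

lemma subtree_graft_selected:
  assumes inj: "inj W" and antichain: "prefix_antichain (range W)"
  shows "subtree (graft (W ` {n. \<sigma> n}) t (\<lambda>w. s (inv W w))) (W n) = (if \<sigma> n then s n else subtree t (W n))"
proof (cases "\<sigma> n")
  case True
  then have "W n \<in> W ` {n. \<sigma> n}" by blast
  then show ?thesis
    using True inj by (simp add: subtree_graft_in[OF prefix_antichain_selected[OF antichain]])
next
  case False
  then have "W n \<notin> W ` {n. \<sigma> n}" using inj by (auto simp: inj_eq)
  moreover have "W ` {n. \<sigma> n} \<subseteq> range W" by blast
  ultimately show ?thesis using False subtree_graft_outside[OF antichain _ rangeI] by simp
qed

text \<open>Independent grafting at the nodes of an infinite antichain, each of whose states accepts a
  second tree, embeds the Cantor space into the language.\<close>
lemma uncountable_lang_from_antichain: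
  assumes run: "run_from A q t \<phi>" and acc: "accepting A \<phi>"
    and inj: "inj (W :: nat \<Rightarrow> dir list)" and antichain: "prefix_antichain (range W)"
    and other: "\<And>n. \<exists>s. s \<in> lang_from A (\<phi> (W n)) \<and> s \<noteq> subtree t (W n)"
  shows "uncountable (lang_from A q)"
proof -
  have "\<forall>n. \<exists>p. run_from A (\<phi> (W n)) (fst p) (snd p) \<and> accepting A (snd p) \<and> fst p \<noteq> subtree t (W n)"
    using other unfolding lang_from_def by fastforce
  then obtain p where p: "\<And>n. run_from A (\<phi> (W n)) (fst (p n)) (snd (p n))"
    "\<And>n. accepting A (snd (p n))" "\<And>n. fst (p n) \<noteq> subtree t (W n)"
    by metis
  define F where "F \<sigma> = graft (W ` {n. \<sigma> n}) t (\<lambda>w. fst (p (inv W w)))" for \<sigma>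
  have "F \<sigma> \<in> lang_from A q" for \<sigma>
  proof -
    interpret graft_runs A q t \<phi> "W ` {n. \<sigma> n}" "\<lambda>w. fst (p (inv W w))" "\<lambda>w. snd (p (inv W w))"
      using run acc prefix_antichain_selected[OF antichain] p(1,2) inj by unfold_locales auto
    show ?thesis unfolding F_def by (rule graft_in_lang_from)
  qed
  moreover have "inj F"
  proof (intro injI ext)
    fix \<sigma> \<tau> n assume "F \<sigma> = F \<tau>"
    then have "subtree (F \<sigma>) (W n) = subtree (F \<tau>) (W n)" by simp
    then show "\<sigma> n = \<tau> n"
      using subtree_graft_selected[OF inj antichain, of \<sigma> t "\<lambda>n. fst (p n)" n]
        subtree_graft_selected[OF inj antichain, of \<tau> t "\<lambda>n. fst (p n)" n] p(3)[of n]
      unfolding F_def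
      by (cases "\<sigma> n"; cases "\<tau> n") simp_all
  qed
  ultimately show ?thesis using uncountable_if_inj_Cantor by blast
qed

section \<open>Letters along a branch and periodicity\<close>

definition off_branch :: "(nat \<Rightarrow> dir) \<Rightarrow> nat \<Rightarrow> dir list" where
  "off_branch b m = node b m @ [flip (b m)]"

definition branch_letter :: "'a tree \<Rightarrow> (nat \<Rightarrow> dir) \<Rightarrow> nat \<Rightarrow> 'a \<times> dir \<times> 'a tree" where
  "branch_letter t b m = (t (node b m), b m, subtree t (off_branch b m))"

lemma length_off_branch [simp]: "length (off_branch b m) = Suc m"
  by (simp add: off_branch_def)

lemma inj_off_branch: "inj (off_branch b)"
  by (rule injI) (metis length_off_branch nat.inject)

lemma node_append_cases:
  "node b a @ u = node b (a + length u) \<or> (\<exists>k<length u. \<exists>z. node b a @ u = off_branch b (a + k) @ z)"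
proof (induction u arbitrary: a)
  case (Cons d u)
  show ?case
  proof (cases "d = b a")
    case True
    then have e: "node b a @ d # u = node b (Suc a) @ u" by (simp add: node_Suc)
    from Cons.IH[of "Suc a"] show ?thesis
    proof
      assume "\<exists>k<length u. \<exists>z. node b (Suc a) @ u = off_branch b (Suc a + k) @ z"
      then obtain k z where "k < length u" "node b (Suc a) @ u = off_branch b (Suc a + k) @ z" by blast
      then show ?thesis using e by (intro disjI2 exI[of _ "Suc k"]) auto
    qed (use e in simp)
  next
    case False
    then have "node b a @ d # u = off_branch b (a + 0) @ u" by (simp add: off_branch_def eq_flip_iff)
    then show ?thesis by blast
  qed
qed simp

lemma prefix_antichain_off_branch: "prefix_antichain (range (off_branch b))"
  unfolding prefix_antichain_def
proof (intro ballI impI)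
  fix w w' assume "w \<in> range (off_branch b)" "w' \<in> range (off_branch b)" "prefix w w'"
  then obtain m m' where mm: "w = off_branch b m" "w' = off_branch b m'" by blast
  have "m = m'"
  proof (rule ccontr)
    assume "m \<noteq> m'"
    then have "m < m'" using prefix_length_le[OF \<open>prefix w w'\<close>] mm by simp
    have "take (Suc m) w' = w"
      using \<open>prefix w w'\<close> mm by (metis prefix_def append_eq_conv_conj length_off_branch)
    moreover have "take (Suc m) w' = node b (Suc m)"
      using \<open>m < m'\<close> mm(2) by (simp add: off_branch_def take_node)
    ultimately show False using mm(1) by (simp add: off_branch_def node_Suc)
  qed
  then show "w = w'" using mm by simp
qed

lemma eventually_periodic_mod:
  fixes f :: "nat \<Rightarrow> 'b"
  assumes "\<forall>k. f (a + k) = f (a + l + k)"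
  shows "f (a + k) = f (a + k mod l)"
proof -
  have "f (a + (j + l * i)) = f (a + j)" for i j
  proof (induction i)
    case (Suc i)
    have "f (a + (j + l * Suc i)) = f (a + l + (j + l * i))" by (simp add: algebra_simps)
    also have "\<dots> = f (a + (j + l * i))" using assms by metis
    finally show ?case using Suc by simp
  qed simp
  then show ?thesis by (metis mod_mult_div_eq add.commute)
qed

lemma subtree_node_periodic:
  assumes "\<forall>k. branch_letter t b (a + k) = branch_letter t b (a + l + k)"
  shows "subtree t (node b (a + k)) = subtree t (node b (a + l + k))"
proof -
  have "\<forall>k. t (node b (a + k) @ u) = t (node b (a + l + k) @ u)" for u
  proof (induction u)
    case Nil
    then show ?case using assms by (simp add: branch_letter_def)
  next
    case (Cons d u)
    show ?case
    proof
      fix k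
      have L: "b (a + k) = b (a + l + k)"
        "subtree t (off_branch b (a + k)) = subtree t (off_branch b (a + l + k))"
        using assms[rule_format, of k] by (auto simp: branch_letter_def)
      show "t (node b (a + k) @ d # u) = t (node b (a + l + k) @ d # u)"
      proof (cases "d = b (a + k)")
        case True
        then have e: "node b (a + k) @ d # u = node b (a + Suc k) @ u"
          "node b (a + l + k) @ d # u = node b (a + l + Suc k) @ u"
          using L(1) by (simp_all add: node_Suc)
        show ?thesis unfolding e by (rule Cons.IH[rule_format])
      next
        case False
        then have "node b (a + k) @ d # u = off_branch b (a + k) @ u"
          "node b (a + l + k) @ d # u = off_branch b (a + l + k) @ u"
          using L(1) by (simp_all add: off_branch_def eq_flip_iff)
        then show ?thesis using L(2) by (metis subtree_apply)
      qed
    qed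
  qed
  then show ?thesis by (auto simp: subtree_def)
qed

lemma subtrees_periodic_branch:
  assumes per: "\<forall>k. branch_letter t b (a + k) = branch_letter t b (a + l + k)" and l: "0 < l"
  shows "subtrees (subtree t (node b a)) \<subseteq>
    (\<lambda>k. subtree t (node b (a + k))) ` {..<l} \<union> (\<Union>k<l. subtrees (subtree t (off_branch b (a + k))))"
proof
  have node_mod: "subtree t (node b (a + k)) = subtree t (node b (a + k mod l))" for k
    using eventually_periodic_mod[of "\<lambda>k. subtree t (node b k)"] subtree_node_periodic[OF per] by blast
  have off_mod: "subtree t (off_branch b (a + k)) = subtree t (off_branch b (a + k mod l))" for k
    using eventually_periodic_mod[OF per, of k] by (simp add: branch_letter_def)
  fix x assume "x \<in> subtrees (subtree t (node b a))"
  then obtain u where x: "x = subtree t (node b a @ u)" unfolding subtrees_def by auto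
  from node_append_cases[of b a u]
  show "x \<in> (\<lambda>k. subtree t (node b (a + k))) ` {..<l} \<union> (\<Union>k<l. subtrees (subtree t (off_branch b (a + k))))"
  proof
    assume "node b a @ u = node b (a + length u)"
    then have "x = subtree t (node b (a + length u mod l))" using x node_mod by simp
    then show ?thesis using l by auto
  next
    assume "\<exists>k<length u. \<exists>z. node b a @ u = off_branch b (a + k) @ z"
    then obtain k z where "node b a @ u = off_branch b (a + k) @ z" by blast
    then have "x = subtree (subtree t (off_branch b (a + k mod l))) z" using x off_mod by simp
    then have "x \<in> subtrees (subtree t (off_branch b (a + k mod l)))"
      by (simp only: subtree_in_subtrees)
    then show ?thesis using l by auto
  qed
qed

lemma regular_tree_periodic_branch:
  assumes per: "\<forall>k. branch_letter t b (a + k) = branch_letter t b (a + l + k)" and l: "0 < l"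
    and off: "\<forall>k<l. regular_tree K (subtree t (off_branch b (a + k)))"
  shows "regular_tree (l + l * K) (subtree t (node b a))"
proof -
  let ?S1 = "(\<lambda>k. subtree t (node b (a + k))) ` {..<l}"
  let ?S2 = "\<Union>k<l. subtrees (subtree t (off_branch b (a + k)))"
  have "finite ?S2" using off unfolding regular_tree_def by auto
  moreover have "card ?S2 \<le> l * K"
  proof -
    have "card ?S2 \<le> (\<Sum>k<l. card (subtrees (subtree t (off_branch b (a + k)))))"
      by (rule card_UN_le) simp
    also have "\<dots> \<le> (\<Sum>k<l. K)"
      by (rule sum_mono) (use off in \<open>auto simp: regular_tree_def\<close>)
    finally show ?thesis by simp
  qed
  moreover have "finite ?S1" "card ?S1 \<le> l"
    using card_image_le[of "{..<l}"] by auto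
  ultimately show ?thesis
    using subtrees_periodic_branch[OF per l] unfolding regular_tree_def
    by (meson add_le_mono card_Un_le finite_UnI finite_subset card_mono le_trans)
qed


section \<open>Pumping along a branch\<close>

text \<open>If the pumped branch visits at depth \<open>i\<close> the node of depth \<open>h i\<close> of \<open>b\<close>, then a node \<open>u\<close>
  below depth \<open>j\<close> of the pumped branch stands for the node \<open>pump_node b h j u\<close> of the original
  tree; off the pumped branch nothing changes.\<close>
fun pump_node :: "(nat \<Rightarrow> dir) \<Rightarrow> (nat \<Rightarrow> nat) \<Rightarrow> nat \<Rightarrow> dir list \<Rightarrow> dir list" where
  "pump_node b h j [] = node b (h j)"
| "pump_node b h j (d # u) = (if d = b (h j) then pump_node b h (Suc j) u else node b (h j) @ d # u)"

lemma pump_node_along: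
  "pump_node b h j (node (\<lambda>i. b (h (j + i))) k @ u) = pump_node b h (j + k) u"
proof (induction k arbitrary: j)
  case (Suc k)
  have "node (\<lambda>i. b (h (j + i))) (Suc k) = b (h j) # node (\<lambda>i. b (h (Suc j + i))) k"
    by (simp add: node_Suc_Cons)
  then show ?case using Suc.IH[of "Suc j"] by simp
qed simp

lemma pump_node_along_0: "pump_node b h 0 (node (\<lambda>i. b (h i)) k @ u) = pump_node b h k u"
  using pump_node_along[of b h 0 k u] by simp

lemma pump_node_straight:
  assumes "\<forall>k\<le>length u. h (j + k) = h j + k"
  shows "pump_node b h j u = node b (h j) @ u"
  using assms
proof (induction u arbitrary: j)
  case (Cons d u)
  show ?case
  proof (cases "d = b (h j)")
    case True
    have "\<forall>k\<le>length u. h (Suc j + k) = h (Suc j) + k"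
    proof (intro allI impI)
      fix k assume "k \<le> length u"
      then have "h (j + Suc k) = h j + Suc k" "h (j + 1) = h j + 1" using Cons.prems by auto
      then show "h (Suc j + k) = h (Suc j) + k" by simp
    qed
    then have "pump_node b h (Suc j) u = node b (h (Suc j)) @ u" by (rule Cons.IH)
    moreover have "h (Suc j) = Suc (h j)" using Cons.prems[rule_format, of 1] by simp
    ultimately show ?thesis using True by (simp add: node_Suc)
  qed simp
qed simp

lemma pump_node_snoc:
  assumes "\<And>i. \<phi> (node b (h (Suc i))) = \<phi> (node b (Suc (h i)))"
  shows "\<phi> (pump_node b h 0 (v @ [d])) = \<phi> (pump_node b h 0 v @ [d])"
proof -
  let ?\<beta> = "\<lambda>i. b (h i)"
  from node_append_cases[of ?\<beta> 0 v] show ?thesis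
  proof
    assume v: "node ?\<beta> 0 @ v = node ?\<beta> (0 + length v)"
    let ?j = "length v"
    have "pump_node b h 0 v = node b (h ?j)" "pump_node b h 0 (v @ [d]) = pump_node b h ?j [d]"
      using pump_node_along_0[of b h ?j "[]"] pump_node_along_0[of b h ?j "[d]"] v by simp_all
    then show ?thesis using assms[of ?j] by (simp add: node_Suc)
  next
    assume "\<exists>k<length v. \<exists>z. node ?\<beta> 0 @ v = off_branch ?\<beta> (0 + k) @ z"
    then obtain k z where v: "v = node ?\<beta> k @ flip (?\<beta> k) # z" by (auto simp: off_branch_def)
    then have "pump_node b h 0 v = node b (h k) @ flip (?\<beta> k) # z"
      "pump_node b h 0 (v @ [d]) = node b (h k) @ flip (?\<beta> k) # z @ [d]"
      using pump_node_along_0[of b h k "flip (?\<beta> k) # z"] pump_node_along_0[of b h k "flip (?\<beta> k) # z @ [d]"]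
      by simp_all
    then show ?thesis by simp
  qed
qed

lemma run_from_pumped:
  assumes run: "run_from A q t \<phi>" and "h 0 = 0"
    and "\<And>i. \<phi> (node b (h (Suc i))) = \<phi> (node b (Suc (h i)))"
  shows "run_from A q (\<lambda>v. t (pump_node b h 0 v)) (\<lambda>v. \<phi> (pump_node b h 0 v))"
  unfolding run_from_def
proof (intro conjI allI)
  show "\<phi> (pump_node b h 0 []) = q" using run \<open>h 0 = 0\<close> by (simp add: run_from_def)
  fix v
  have "(\<phi> (pump_node b h 0 v), t (pump_node b h 0 v),
      \<phi> (pump_node b h 0 v @ [Lft]), \<phi> (pump_node b h 0 v @ [Rgt])) \<in> trans A"
    using run by (simp add: run_from_def)
  then show "(\<phi> (pump_node b h 0 v), t (pump_node b h 0 v),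
      \<phi> (pump_node b h 0 (v @ [Lft])), \<phi> (pump_node b h 0 (v @ [Rgt]))) \<in> trans A"
    using pump_node_snoc[of \<phi> b h, OF assms(3)] by simp
qed

text \<open>A branch of the pumped tree either is the pumped branch or leaves it at some depth \<open>k\<close>,
  after which it follows a branch of the original tree.\<close>
lemma accepting_pumped:
  assumes acc: "accepting A \<phi>" and spine: "even_parity (\<lambda>i. color A (\<phi> (node b (h i))))"
  shows "accepting A (\<lambda>v. \<phi> (pump_node b h 0 v))"
  unfolding accepting_iff_even_parity
proof
  fix b'
  let ?\<beta> = "\<lambda>i. b (h i)"
  show "even_parity (\<lambda>n. color A (\<phi> (pump_node b h 0 (node b' n))))"
  proof (cases "b' = ?\<beta>")
    case True
    then have "pump_node b h 0 (node b' n) = node b (h n)" for n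
      using pump_node_along_0[of b h n "[]"] by simp
    then show ?thesis using spine by simp
  next
    case False
    then obtain k where k: "b' k \<noteq> ?\<beta> k" "\<forall>i<k. b' i = ?\<beta> i"
      using exists_least_iff[of "\<lambda>k. b' k \<noteq> ?\<beta> k"] by (metis ext)
    have nk: "node b' k = node ?\<beta> k" using k(2) unfolding node_def by simp
    define b'' where "b'' = branch_through (node b (h k) @ [b' k]) (\<lambda>i. b' (Suc k + i))"
    have "pump_node b h 0 (node b' (m + Suc k)) = node b'' (m + Suc (h k))" for m
    proof -
      have "node b' (m + Suc k) = node b' k @ b' k # node (\<lambda>i. b' (Suc k + i)) m"
        using node_add[of b' "Suc k" m] by (simp add: node_Suc add.commute)
      then have "pump_node b h 0 (node b' (m + Suc k)) = pump_node b h k (b' k # node (\<lambda>i. b' (Suc k + i)) m)"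
        using nk pump_node_along_0 by metis
      also have "\<dots> = node b (h k) @ b' k # node (\<lambda>i. b' (Suc k + i)) m" using k(1) by simp
      also have "\<dots> = node b'' (length (node b (h k) @ [b' k]) + m)"
        unfolding b''_def node_branch_through by simp
      finally show ?thesis by (simp add: add.commute)
    qed
    moreover have "even_parity (\<lambda>n. color A (\<phi> (node b'' n)))"
      using acc unfolding accepting_iff_even_parity by blast
    ultimately show ?thesis
      using even_parity_shift_eq[of 0 "\<lambda>n. color A (\<phi> (pump_node b h 0 (node b' n)))" "Suc k"
          "\<lambda>n. color A (\<phi> (node b'' n))" "Suc (h k)"] by simp
  qed
qed


section \<open>Pumping infinitely many loops independently\<close>

text \<open>Loops from depth \<open>start n\<close> to depth \<open>stop n\<close> of the branch \<open>b\<close>, far apart, on whose ends the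
  run is in the same state. Each subset of the loops, given by its indicator \<open>\<sigma>\<close>, is traversed
  twice; \<open>mismatch n\<close> and \<open>depth n\<close> serve to tell the resulting trees apart.\<close>
locale pumping =
  fixes A :: "'a pta" and q :: nat and t :: "'a tree" and \<phi> :: "dir list \<Rightarrow> nat" and b :: "nat \<Rightarrow> dir"
    and start stop mismatch depth :: "nat \<Rightarrow> nat" and K c :: nat
  assumes run: "run_from A q t \<phi>" and acc: "accepting A \<phi>"
    and start_less_stop: "\<And>n. start n < stop n"
    and spaced: "\<And>n. stop n + mismatch n + depth n < start (Suc n)"
    and same_state: "\<And>n. \<phi> (node b (start n)) = \<phi> (node b (stop n))"
    and letters_agree: "\<And>n k. k < mismatch n \<Longrightarrow> branch_letter t b (start n + k) = branch_letter t b (stop n + k)"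
    and letter_differs: "\<And>n. branch_letter t b (start n + mismatch n) \<noteq> branch_letter t b (stop n + mismatch n)"
    and off_regular: "\<And>m. start 0 \<le> m \<Longrightarrow> regular_tree K (subtree t (off_branch b m))"
    and not_regular_near:
      "\<And>n s. (\<forall>u. length u < depth n \<longrightarrow> s u = subtree t (node b (stop n)) u) \<Longrightarrow> \<not> regular_tree K s"
    and colour_le: "\<And>m. start 0 \<le> m \<Longrightarrow> color A (\<phi> (node b m)) \<le> c"
    and colour_inf: "\<exists>\<^sub>\<infinity>m. color A (\<phi> (node b m)) = c"
    and even_colour: "even c"
begin

lemma stop_less_start_Suc: "stop n < start (Suc n)"
  using spaced[of n] by simp

lemma stop_less_stop_Suc: "stop n < stop (Suc n)"
  using stop_less_start_Suc[of n] start_less_stop[of "Suc n"] by simp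

lemma stop_mono: "n \<le> m \<Longrightarrow> stop n \<le> stop m"
  using stop_less_stop_Suc by (metis lift_Suc_mono_less le_eq_less_or_eq)

lemma start_mono: "n \<le> m \<Longrightarrow> start n \<le> start m"
  using stop_less_start_Suc start_less_stop
  by (metis lift_Suc_mono_less le_eq_less_or_eq less_trans)

lemma le_stop: "n \<le> stop n"
proof (induction n)
  case (Suc n)
  then show ?case using stop_less_stop_Suc[of n] by simp
qed simp

text \<open>The pumped branch runs through the blocks \<open>[block_start n, stop n)\<close> of \<open>b\<close>, each followed by a
  second copy of the loop \<open>[start n, stop n)\<close> if \<open>\<sigma> n\<close>; block \<open>n\<close> begins at depth
  \<open>pumped_start \<sigma> n\<close> of the pumped branch, shifted by the \<open>extra \<sigma> n\<close> repeated positions before it.\<close>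
definition block_start :: "nat \<Rightarrow> nat" where
  "block_start n = (case n of 0 \<Rightarrow> 0 | Suc m \<Rightarrow> stop m)"

definition extra :: "(nat \<Rightarrow> bool) \<Rightarrow> nat \<Rightarrow> nat" where
  "extra \<sigma> n = (\<Sum>k<n. if \<sigma> k then stop k - start k else 0)"

definition pumped_start :: "(nat \<Rightarrow> bool) \<Rightarrow> nat \<Rightarrow> nat" where
  "pumped_start \<sigma> n = block_start n + extra \<sigma> n"

definition block_of :: "(nat \<Rightarrow> bool) \<Rightarrow> nat \<Rightarrow> nat" where
  "block_of \<sigma> i = (LEAST n. i < pumped_start \<sigma> (Suc n))"

definition spine :: "(nat \<Rightarrow> bool) \<Rightarrow> nat \<Rightarrow> nat" where
  "spine \<sigma> i = (let n = block_of \<sigma> i; p = i - extra \<sigma> n in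
     if p < stop n then p else start n + (p - stop n))"

lemma block_start_0 [simp]: "block_start 0 = 0"
  and block_start_Suc [simp]: "block_start (Suc n) = stop n"
  by (simp_all add: block_start_def)

lemma block_start_less_stop: "block_start n < stop n"
  using start_less_stop[of 0] stop_less_stop_Suc by (cases n) auto

lemma block_start_le_start: "block_start n \<le> start n"
  using stop_less_start_Suc by (cases n) (auto simp: less_imp_le)

lemma extra_0 [simp]: "extra \<sigma> 0 = 0"
  by (simp add: extra_def)

lemma extra_Suc: "extra \<sigma> (Suc n) = extra \<sigma> n + (if \<sigma> n then stop n - start n else 0)"
  by (simp add: extra_def)

lemma extra_mono: "n \<le> m \<Longrightarrow> extra \<sigma> n \<le> extra \<sigma> m"
  unfolding extra_def by (rule sum_mono2) auto

lemma pumped_start_Suc: "pumped_start \<sigma> (Suc n) = stop n + extra \<sigma> (Suc n)"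
  by (simp add: pumped_start_def)

lemma pumped_start_less_Suc: "pumped_start \<sigma> n < pumped_start \<sigma> (Suc n)"
  unfolding pumped_start_def using block_start_less_stop[of n] extra_mono[of n "Suc n" \<sigma>] by simp

lemma pumped_start_mono: "n \<le> m \<Longrightarrow> pumped_start \<sigma> n \<le> pumped_start \<sigma> m"
  using pumped_start_less_Suc by (metis lift_Suc_mono_less le_eq_less_or_eq)

lemma pumped_start_less_iff: "pumped_start \<sigma> n < pumped_start \<sigma> m \<longleftrightarrow> n < m"
  using pumped_start_mono pumped_start_less_Suc by (metis lift_Suc_mono_less not_le)

lemma le_pumped_start: "n \<le> pumped_start \<sigma> n"
proof (induction n)
  case (Suc n)
  then show ?case using pumped_start_less_Suc[of \<sigma> n] by simp
qed simp

lemma block_of_eqI: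
  assumes "pumped_start \<sigma> n \<le> i" "i < pumped_start \<sigma> (Suc n)"
  shows "block_of \<sigma> i = n"
  unfolding block_of_def
proof (rule Least_equality)
  fix m assume "i < pumped_start \<sigma> (Suc m)"
  then have "pumped_start \<sigma> n < pumped_start \<sigma> (Suc m)" using assms(1) by simp
  then show "n \<le> m" by (simp add: pumped_start_less_iff)
qed (rule assms(2))

lemma block_of_bounds: "pumped_start \<sigma> (block_of \<sigma> i) \<le> i" "i < pumped_start \<sigma> (Suc (block_of \<sigma> i))"
proof -
  have "i < pumped_start \<sigma> (Suc i)" using le_pumped_start[of "Suc i" \<sigma>] by simp
  then show upper: "i < pumped_start \<sigma> (Suc (block_of \<sigma> i))"
    unfolding block_of_def by (rule LeastI)
  show "pumped_start \<sigma> (block_of \<sigma> i) \<le> i"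
  proof (cases "block_of \<sigma> i")
    case (Suc m)
    have "\<not> i < pumped_start \<sigma> (Suc m)"
    proof
      assume "i < pumped_start \<sigma> (Suc m)"
      then have "block_of \<sigma> i \<le> m" unfolding block_of_def by (rule Least_le)
      then show False using Suc by simp
    qed
    then show ?thesis using Suc by simp
  qed (simp add: pumped_start_def)
qed

lemma spine_plain:
  assumes "block_start n \<le> p" "p < stop n"
  shows "spine \<sigma> (p + extra \<sigma> n) = p"
proof -
  have "block_of \<sigma> (p + extra \<sigma> n) = n"
    using assms extra_mono[of n "Suc n" \<sigma>]
    by (intro block_of_eqI) (simp_all add: pumped_start_def pumped_start_Suc)
  then show ?thesis using assms by (simp add: spine_def Let_def)
qed

lemma spine_repeat:
  assumes "\<sigma> n" "k < stop n - start n"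
  shows "spine \<sigma> (stop n + extra \<sigma> n + k) = start n + k"
proof -
  have "block_of \<sigma> (stop n + extra \<sigma> n + k) = n"
    using assms block_start_less_stop[of n]
    by (intro block_of_eqI) (simp_all add: pumped_start_def pumped_start_Suc extra_Suc)
  then show ?thesis by (simp add: spine_def Let_def)
qed

lemma spine_cases:
  obtains (plain) n p where "block_start n \<le> p" "p < stop n" "i = p + extra \<sigma> n"
  | (repeat) n k where "\<sigma> n" "k < stop n - start n" "i = stop n + extra \<sigma> n + k"
proof -
  let ?n = "block_of \<sigma> i"
  let ?p = "i - extra \<sigma> ?n"
  have p: "block_start ?n \<le> ?p" "i = ?p + extra \<sigma> ?n"
    using block_of_bounds(1)[where \<sigma> = \<sigma> and i = i] by (auto simp: pumped_start_def)
  show ?thesis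
  proof (cases "?p < stop ?n")
    case False
    moreover have "i < stop ?n + extra \<sigma> (Suc ?n)"
      using block_of_bounds(2)[where \<sigma> = \<sigma> and i = i] by (simp add: pumped_start_Suc)
    ultimately have "\<sigma> ?n" "?p - stop ?n < stop ?n - start ?n" "i = stop ?n + extra \<sigma> ?n + (?p - stop ?n)"
      using p(2) by (auto simp: extra_Suc split: if_splits)
    then show ?thesis by (rule repeat)
  qed (use p plain in blast)
qed

lemma spine_0: "spine \<sigma> 0 = 0"
  using spine_plain[of 0 0 \<sigma>] block_start_less_stop[of 0] by simp

lemma spine_le: "spine \<sigma> i \<le> i"
  by (cases rule: spine_cases[where i = i and \<sigma> = \<sigma>]) (use spine_plain spine_repeat start_less_stop in \<open>force+\<close>)

lemma spine_Suc:
  "spine \<sigma> (Suc i) = Suc (spine \<sigma> i) \<or> (\<exists>n. Suc (spine \<sigma> i) = stop n \<and> spine \<sigma> (Suc i) = start n)"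
proof (cases rule: spine_cases[where i = i and \<sigma> = \<sigma>])
  case (plain n p)
  then have spine_i: "spine \<sigma> i = p" using spine_plain by simp
  consider "Suc p < stop n" | "Suc p = stop n" "\<sigma> n" | "Suc p = stop n" "\<not> \<sigma> n"
    using plain(2) by linarith
  then show ?thesis
  proof cases
    case 1
    then show ?thesis using spine_plain[of n "Suc p" \<sigma>] plain spine_i by simp
  next
    case 2
    then have "Suc i = stop n + extra \<sigma> n + 0" using plain by simp
    then have "spine \<sigma> (Suc i) = start n" using spine_repeat[of \<sigma> n 0] start_less_stop[of n] 2 by simp
    then show ?thesis using 2 spine_i by blast
  next
    case 3
    then have "Suc i = stop n + extra \<sigma> (Suc n)" using plain by (simp add: extra_Suc)
    then show ?thesis using spine_plain[of "Suc n" "stop n" \<sigma>] stop_less_stop_Suc[of n] 3 spine_i by simp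
  qed
next
  case (repeat n k)
  then have spine_i: "spine \<sigma> i = start n + k" using spine_repeat by simp
  show ?thesis
  proof (cases "Suc k < stop n - start n")
    case True
    then show ?thesis using spine_repeat[of \<sigma> n "Suc k"] repeat spine_i by simp
  next
    case False
    then have "Suc (start n + k) = stop n" using repeat(2) by linarith
    moreover have "Suc i = stop n + extra \<sigma> (Suc n)"
      using repeat calculation by (simp add: extra_Suc)
    ultimately show ?thesis
      using spine_plain[of "Suc n" "stop n" \<sigma>] stop_less_stop_Suc[of n] spine_i by simp
  qed
qed

lemma same_state_spine_Suc: "\<phi> (node b (spine \<sigma> (Suc i))) = \<phi> (node b (Suc (spine \<sigma> i)))"
  using spine_Suc[of \<sigma> i] same_state by metis

lemma stop_le_spine:
  assumes "pumped_start \<sigma> (Suc n) \<le> i"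
  shows "stop n \<le> spine \<sigma> i"
proof (cases rule: spine_cases[where i = i and \<sigma> = \<sigma>])
  case (plain n' p)
  then have "i < pumped_start \<sigma> (Suc n')"
    using extra_mono[of n' "Suc n'" \<sigma>] by (simp add: pumped_start_Suc)
  then have "Suc n \<le> n'" using assms pumped_start_less_iff[of \<sigma> "Suc n" "Suc n'"] by simp
  then have "stop n \<le> block_start n'" by (cases n') (auto simp: stop_mono)
  then show ?thesis using spine_plain plain by simp
next
  case (repeat n' k)
  then have "i < pumped_start \<sigma> (Suc n')" by (simp add: pumped_start_Suc extra_Suc)
  then have "Suc n \<le> n'" using assms pumped_start_less_iff[of \<sigma> "Suc n" "Suc n'"] by simp
  then have "stop n \<le> block_start n'" by (cases n') (auto simp: stop_mono)
  then show ?thesis using spine_repeat repeat block_start_le_start[of n'] by simp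
qed

lemma spine_surj: "\<exists>i. spine \<sigma> i = p"
proof -
  define n where "n = (LEAST n. p < stop n)"
  have "p < stop (Suc p)" using le_stop[of "Suc p"] by simp
  then have "p < stop n" unfolding n_def by (rule LeastI)
  moreover have "block_start n \<le> p"
  proof (cases n)
    case (Suc m)
    have "\<not> p < stop m"
    proof
      assume "p < stop m"
      then have "n \<le> m" unfolding n_def by (rule Least_le)
      then show False using Suc by simp
    qed
    then show ?thesis using Suc by simp
  qed simp
  ultimately show ?thesis using spine_plain by blast
qed

end


context pumping
begin

definition pumped :: "(nat \<Rightarrow> bool) \<Rightarrow> 'a tree" where
  "pumped \<sigma> = (\<lambda>v. t (pump_node b (spine \<sigma>) 0 v))"

definition pumped_branch :: "(nat \<Rightarrow> bool) \<Rightarrow> nat \<Rightarrow> dir" where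
  "pumped_branch \<sigma> = (\<lambda>i. b (spine \<sigma> i))"

lemma spine_even_parity: "even_parity (\<lambda>i. color A (\<phi> (node b (spine \<sigma> i))))"
proof -
  define F where "F i = color A (\<phi> (node b (spine \<sigma> i)))" for i
  have c: "c \<in> inf_values F"
    unfolding inf_values_def INFM_nat
  proof (intro CollectI allI)
    fix M
    obtain m where m: "m > M" "color A (\<phi> (node b m)) = c" using colour_inf unfolding INFM_nat by blast
    obtain i where i: "spine \<sigma> i = m" using spine_surj by blast
    then have "i > M" using spine_le[of \<sigma> i] m(1) by simp
    then show "\<exists>i>M. F i = c" using i m(2) unfolding F_def by blast
  qed
  have le_c: "x \<le> c" if "x \<in> inf_values F" for x
  proof -
    have "\<forall>m. \<exists>i>m. F i = x" using that unfolding inf_values_def INFM_nat by simp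
    then obtain i where i: "i > pumped_start \<sigma> (Suc 0)" "F i = x" by blast
    then have "start 0 \<le> spine \<sigma> i"
      using stop_le_spine[of \<sigma> 0 i] start_less_stop[of 0] by simp
    from colour_le[OF this] show ?thesis using i(2) unfolding F_def by simp
  qed
  then have "inf_values F \<subseteq> {..c}" by blast
  then have "finite (inf_values F)" using finite_subset by blast
  then have "Max (inf_values F) = c" using c le_c by (intro Max_eqI) auto
  then show ?thesis unfolding even_parity_def F_def using even_colour by simp
qed

lemma pumped_in_lang_from: "pumped \<sigma> \<in> lang_from A q"
proof -
  have "run_from A q (pumped \<sigma>) (\<lambda>v. \<phi> (pump_node b (spine \<sigma>) 0 v))"
    unfolding pumped_def by (rule run_from_pumped[OF run spine_0 same_state_spine_Suc])
  moreover have "accepting A (\<lambda>v. \<phi> (pump_node b (spine \<sigma>) 0 v))"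
    by (rule accepting_pumped[OF acc spine_even_parity])
  ultimately show ?thesis unfolding lang_from_def by blast
qed

lemma subtree_pumped_along:
  "subtree (pumped \<sigma>) (node (pumped_branch \<sigma>) j) u = t (pump_node b (spine \<sigma>) j u)"
  unfolding pumped_def pumped_branch_def subtree_def by (simp add: pump_node_along_0)

lemma pumped_along: "pumped \<sigma> (node (pumped_branch \<sigma>) j) = t (node b (spine \<sigma> j))"
  using subtree_pumped_along[of \<sigma> j "[]"] by simp

lemma subtree_pumped_off:
  assumes "d \<noteq> b (spine \<sigma> j)"
  shows "subtree (pumped \<sigma>) (node (pumped_branch \<sigma>) j @ [d]) = subtree t (off_branch b (spine \<sigma> j))"
proof -
  have "d = flip (b (spine \<sigma> j))" using assms by (simp add: eq_flip_iff)
  then show ?thesis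
    using subtree_pumped_along[of \<sigma> j "d # _"] by (simp add: fun_eq_iff subtree_def off_branch_def)
qed

lemma spine_after_block:
  assumes "stop n + k < stop (Suc n)"
  shows "spine \<sigma> (pumped_start \<sigma> (Suc n) + k) = stop n + k"
proof -
  have e: "pumped_start \<sigma> (Suc n) + k = (stop n + k) + extra \<sigma> (Suc n)"
    by (simp add: pumped_start_Suc)
  show ?thesis unfolding e by (rule spine_plain) (use assms in simp_all)
qed

lemma spine_after_repeat:
  assumes "\<sigma> n" "k \<le> mismatch n"
  shows "spine \<sigma> (stop n + extra \<sigma> n + k) = start n + k"
proof (cases "k < stop n - start n")
  case False
  have "start n + k < stop (Suc n)"
    using assms(2) spaced[of n] start_less_stop[of n] start_less_stop[of "Suc n"] by simp
  then have "spine \<sigma> (start n + k + extra \<sigma> (Suc n)) = start n + k"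
    using False by (intro spine_plain) auto
  moreover have "start n + k + extra \<sigma> (Suc n) = stop n + extra \<sigma> n + k"
    using False assms(1) start_less_stop[of n] by (simp add: extra_Suc)
  ultimately show ?thesis by simp
qed (use assms spine_repeat in blast)

text \<open>Every subtree along the pumped branch has more than \<open>K\<close> subtrees, since further down it
  contains a copy of the first \<open>depth n\<close> levels of a subtree at depth \<open>stop n\<close> of \<open>b\<close>.\<close>
lemma not_regular_pumped_along: "\<not> regular_tree K (subtree (pumped \<sigma>) (node (pumped_branch \<sigma>) i))"
proof -
  let ?j = "pumped_start \<sigma> (Suc i)"
  have spine_j: "spine \<sigma> (?j + k) = stop i + k" if "k \<le> depth i" for k
    using that spaced[of i] start_less_stop[of "Suc i"] by (intro spine_after_block) simp
  have "subtree (pumped \<sigma>) (node (pumped_branch \<sigma>) ?j) u = subtree t (node b (stop i)) u"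
    if "length u < depth i" for u
  proof -
    have "pump_node b (spine \<sigma>) ?j u = node b (spine \<sigma> ?j) @ u"
      using that spine_j spine_j[of 0] by (intro pump_node_straight) simp
    then show ?thesis using subtree_pumped_along spine_j[of 0] by (simp add: subtree_def)
  qed
  then have "\<not> regular_tree K (subtree (pumped \<sigma>) (node (pumped_branch \<sigma>) ?j))"
    by (intro not_regular_near) blast
  moreover obtain z where "subtree (pumped \<sigma>) (node (pumped_branch \<sigma>) ?j)
      = subtree (subtree (pumped \<sigma>) (node (pumped_branch \<sigma>) i)) z"
    using subtree_node_extends le_pumped_start[of "Suc i" \<sigma>] by (metis Suc_leD)
  ultimately show ?thesis using regular_tree_subtree by metis
qed

lemma spine_eq_before:
  assumes "\<forall>m<n. \<sigma> m = \<tau> m" "i < stop n + extra \<sigma> n"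
  shows "spine \<sigma> i = spine \<tau> i"
proof -
  have extra_eq: "extra \<sigma> m = extra \<tau> m" if "m \<le> n" for m
    unfolding extra_def using assms(1) that by (intro sum.cong) auto
  show ?thesis
  proof (cases rule: spine_cases[where i = i and \<sigma> = \<sigma>])
    case (plain n' p)
    show ?thesis
    proof (cases "n' \<le> n")
      case True
      then show ?thesis using plain spine_plain extra_eq by metis
    next
      case False
      then have "stop n \<le> block_start n'" by (cases n') (auto simp: stop_mono)
      moreover have "extra \<sigma> n \<le> extra \<sigma> n'" using False by (intro extra_mono) simp
      ultimately show ?thesis using assms(2) plain by simp
    qed
  next
    case (repeat n' k)
    show ?thesis
    proof (cases "n' < n")
      case True
      then show ?thesis using repeat spine_repeat extra_eq assms(1) by (metis less_imp_le)
    next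
      case False
      then have "stop n \<le> stop n'" "extra \<sigma> n \<le> extra \<sigma> n'" by (auto intro: stop_mono extra_mono)
      then show ?thesis using assms(2) repeat by simp
    qed
  qed
qed

lemma spine_at_first_difference:
  assumes \<sigma>: "\<sigma> n" and \<tau>: "\<not> \<tau> n" and agree: "\<forall>m<n. \<sigma> m = \<tau> m" and k: "k \<le> mismatch n"
  shows "spine \<sigma> (stop n + extra \<sigma> n + k) = start n + k" "spine \<tau> (stop n + extra \<sigma> n + k) = stop n + k"
proof -
  show "spine \<sigma> (stop n + extra \<sigma> n + k) = start n + k" by (rule spine_after_repeat[of \<sigma> n, OF \<sigma> k])
  have "extra \<sigma> n = extra \<tau> n" unfolding extra_def using agree by (intro sum.cong) auto
  then have "stop n + extra \<sigma> n = pumped_start \<tau> (Suc n)"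
    using \<tau> unfolding pumped_start_Suc extra_Suc by simp
  then show "spine \<tau> (stop n + extra \<sigma> n + k) = stop n + k"
    using k spaced[of n] start_less_stop[of "Suc n"] by (simp add: spine_after_block)
qed

lemma pumped_branch_eq_before_mismatch:
  assumes \<sigma>: "\<sigma> n" and \<tau>: "\<not> \<tau> n" and agree: "\<forall>m<n. \<sigma> m = \<tau> m"
    and i: "i < stop n + extra \<sigma> n + mismatch n"
  shows "pumped_branch \<sigma> i = pumped_branch \<tau> i"
proof (cases "i < stop n + extra \<sigma> n")
  case True
  then show ?thesis using spine_eq_before[OF agree] unfolding pumped_branch_def by simp
next
  case False
  define k where "k = i - (stop n + extra \<sigma> n)"
  have k: "k < mismatch n" "i = stop n + extra \<sigma> n + k" using False i unfolding k_def by simp_all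
  then show ?thesis
    using letters_agree[OF k(1)] spine_at_first_difference[OF \<sigma> \<tau> agree, of k]
    unfolding pumped_branch_def branch_letter_def by simp
qed

text \<open>Where \<open>\<sigma>\<close> and \<open>\<tau>\<close> first differ, the pumped branches of the two trees run together until
  they read the letters after \<open>start n + mismatch n\<close> and after \<open>stop n + mismatch n\<close>, which differ;
  the direction there cannot differ, as one tree would continue with a subtree that is not
  \<open>K\<close>-regular and the other with one that is.\<close>
lemma pumped_neq:
  assumes \<sigma>: "\<sigma> n" and \<tau>: "\<not> \<tau> n" and agree: "\<forall>m<n. \<sigma> m = \<tau> m"
  shows "pumped \<sigma> \<noteq> pumped \<tau>"
proof
  assume eq: "pumped \<sigma> = pumped \<tau>"
  define J where "J = stop n + extra \<sigma> n + mismatch n"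
  let ?x = "start n + mismatch n" and ?y = "stop n + mismatch n"
  have v: "node (pumped_branch \<sigma>) J = node (pumped_branch \<tau>) J"
    unfolding node_def J_def using pumped_branch_eq_before_mismatch[OF \<sigma> \<tau> agree] by simp
  have x: "spine \<sigma> J = ?x" and y: "spine \<tau> J = ?y"
    using spine_at_first_difference[OF \<sigma> \<tau> agree order_refl] unfolding J_def by simp_all
  have "t (node b ?x) = t (node b ?y)"
    using pumped_along[of \<sigma> J] pumped_along[of \<tau> J] eq v x y by simp
  moreover have dir: "b ?x = b ?y"
  proof (rule ccontr)
    assume ne: "b ?x \<noteq> b ?y"
    have "node (pumped_branch \<sigma>) (Suc J) = node (pumped_branch \<sigma>) J @ [b ?x]"
      using x by (simp add: node_Suc pumped_branch_def)
    then have "\<not> regular_tree K (subtree (pumped \<tau>) (node (pumped_branch \<tau>) J @ [b ?x]))"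
      using not_regular_pumped_along[of \<sigma> "Suc J"] eq v by simp
    moreover have "start 0 \<le> ?y" using start_mono[of 0 n] start_less_stop[of n] by simp
    ultimately show False using subtree_pumped_off[of "b ?x" \<tau> J] off_regular ne y by simp
  qed
  moreover have "subtree t (off_branch b ?x) = subtree t (off_branch b ?y)"
    using subtree_pumped_off[of "flip (b ?x)" \<sigma> J] subtree_pumped_off[of "flip (b ?x)" \<tau> J] eq v x y dir
    by simp
  ultimately have "branch_letter t b ?x = branch_letter t b ?y" by (simp add: branch_letter_def)
  then show False using letter_differs by simp
qed

lemma inj_pumped: "inj pumped"
proof (rule injI, rule ccontr)
  fix \<sigma> \<tau> :: "nat \<Rightarrow> bool" assume eq: "pumped \<sigma> = pumped \<tau>" and "\<sigma> \<noteq> \<tau>"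
  then have "\<exists>n. \<sigma> n \<noteq> \<tau> n" by (auto simp: fun_eq_iff)
  then obtain n where n: "\<sigma> n \<noteq> \<tau> n" "\<forall>m<n. \<sigma> m = \<tau> m"
    using exists_least_iff[of "\<lambda>n. \<sigma> n \<noteq> \<tau> n"] by blast
  then show False
    using pumped_neq[of \<sigma> n \<tau>] pumped_neq[of \<tau> n \<sigma>] eq by (cases "\<sigma> n") auto
qed

lemma uncountable_lang_from: "uncountable (lang_from A q)"
  using uncountable_if_inj_Cantor[OF inj_pumped] pumped_in_lang_from by blast

end


section \<open>Countable languages have eventually regular branches\<close>

lemma finite_off_branch_not_regular:
  assumes wf: "wf_pta A" and run: "run_from A q t \<phi>" and acc: "accepting A \<phi>"
    and q: "q \<in> states A" and countable: "countable (lang_from A q)"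
  shows "finite {m. \<not> regular_tree (card (states A)) (subtree t (off_branch b m))}"
proof (rule ccontr)
  define M where "M = {m. \<not> regular_tree (card (states A)) (subtree t (off_branch b m))}"
  assume "infinite {m. \<not> regular_tree (card (states A)) (subtree t (off_branch b m))}"
  then have M: "infinite M" unfolding M_def .
  define W where "W i = off_branch b (enumerate M i)" for i
  have "inj (enumerate M)" using M by (simp add: strict_mono_imp_inj_on strict_mono_enumerate)
  then have "inj W" unfolding W_def using inj_off_branch by (simp add: inj_compose[unfolded comp_def])
  moreover have "prefix_antichain (range W)"
    by (rule prefix_antichain_subset[OF prefix_antichain_off_branch]) (auto simp: W_def)
  moreover have "\<exists>s. s \<in> lang_from A (\<phi> (W i)) \<and> s \<noteq> subtree t (W i)" for i
  proof (rule ccontr)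
    assume "\<not> ?thesis"
    then have "lang_from A (\<phi> (W i)) \<subseteq> {subtree t (W i)}" by blast
    then have "regular_tree (card (states A)) (subtree t (W i))"
      using regular_tree_if_lang_from_singleton[OF wf run_from_subtree[OF run] accepting_subtree[OF acc]
          run_from_in_states[OF wf run q]] by blast
    moreover have "enumerate M i \<in> M" using M by (rule enumerate_in_set)
    ultimately show False unfolding M_def W_def by simp
  qed
  ultimately have "uncountable (lang_from A q)" by (rule uncountable_lang_from_antichain[OF run acc])
  then show False using countable by simp
qed

lemma dominant_colour:
  assumes wf: "wf_pta A" and run: "run_from A q t \<phi>" and acc: "accepting A \<phi>" and q: "q \<in> states A"
  obtains c N where "even c" "\<exists>\<^sub>\<infinity>m. color A (\<phi> (node b m)) = c"
    "\<And>m. N \<le> m \<Longrightarrow> color A (\<phi> (node b m)) \<le> c"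
proof -
  define F where "F m = color A (\<phi> (node b m))" for m
  have range: "range F \<subseteq> color A ` states A"
    unfolding F_def using run_from_in_states[OF wf run q] by auto
  moreover have fin: "finite (color A ` states A)" using wf unfolding wf_pta_def by simp
  ultimately have "finite (inf_values F)" "inf_values F \<noteq> {}"
    by (rule inf_values_finite_range)+
  then have "Max (inf_values F) \<in> inf_values F" "\<And>x. x \<in> inf_values F \<Longrightarrow> x \<le> Max (inf_values F)"
    by simp_all
  moreover obtain N where "\<And>m. N \<le> m \<Longrightarrow> F m \<in> inf_values F"
    using eventually_in_inf_values[OF range fin] by blast
  moreover have "even (Max (inf_values F))"
    using acc unfolding accepting_iff_even_parity even_parity_def F_def by blast
  ultimately show ?thesis using that unfolding F_def inf_values_def by blast
qed

text \<open>Beyond depth \<open>m\<close>, a state repeats within every window of \<open>card (states A) + 1\<close> nodes;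
  the letters read after the two occurrences cannot agree forever, since the subtree would then be
  periodic along \<open>b\<close>.\<close>
lemma loop_with_mismatch:
  assumes wf: "wf_pta A" and run: "run_from A q t \<phi>" and q: "q \<in> states A"
    and off: "\<And>m'. m \<le> m' \<Longrightarrow> regular_tree (card (states A)) (subtree t (off_branch b m'))"
    and not_regular: "\<And>a. m \<le> a \<Longrightarrow>
      \<not> regular_tree (card (states A) + card (states A) * card (states A)) (subtree t (node b a))"
  obtains a a' e where "m \<le> a" "a < a'" "\<phi> (node b a) = \<phi> (node b a')"
    "\<And>k. k < e \<Longrightarrow> branch_letter t b (a + k) = branch_letter t b (a' + k)"
    "branch_letter t b (a + e) \<noteq> branch_letter t b (a' + e)"
proof -
  let ?k = "card (states A)"
  have "(\<lambda>j. \<phi> (node b j)) ` {m..m + ?k} \<subseteq> states A" using run_from_in_states[OF wf run q] by auto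
  moreover have "card (states A) < card {m..m + ?k}" by simp
  moreover have "finite (states A)" using wf unfolding wf_pta_def by simp
  ultimately have "\<not> inj_on (\<lambda>j. \<phi> (node b j)) {m..m + ?k}"
    using card_inj_on_le[of "\<lambda>j. \<phi> (node b j)" "{m..m + ?k}" "states A"] by linarith
  then obtain a a' where aa': "m \<le> a" "a < a'" "a' \<le> m + ?k" "\<phi> (node b a) = \<phi> (node b a')"
    unfolding inj_on_def by (metis atLeastAtMost_iff linorder_neqE_nat)
  have "\<exists>e. branch_letter t b (a + e) \<noteq> branch_letter t b (a' + e)"
  proof (rule ccontr)
    assume "\<nexists>e. branch_letter t b (a + e) \<noteq> branch_letter t b (a' + e)"
    then have "\<forall>k. branch_letter t b (a + k) = branch_letter t b (a + (a' - a) + k)" using aa'(2) by simp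
    moreover have "\<forall>k<a' - a. regular_tree ?k (subtree t (off_branch b (a + k)))" using off aa'(1) by simp
    ultimately have "regular_tree ((a' - a) + (a' - a) * ?k) (subtree t (node b a))"
      using aa'(2) by (intro regular_tree_periodic_branch) simp_all
    moreover have "(a' - a) + (a' - a) * ?k \<le> ?k + ?k * ?k"
    proof -
      have "a' - a \<le> ?k" using aa'(1,3) by simp
      then show ?thesis using mult_le_mono1[of "a' - a" ?k ?k] by linarith
    qed
    ultimately show False using not_regular[OF aa'(1)] regular_tree_mono by blast
  qed
  then obtain e where "branch_letter t b (a + e) \<noteq> branch_letter t b (a' + e)"
    "\<And>k. k < e \<Longrightarrow> branch_letter t b (a + k) = branch_letter t b (a' + k)"
    using exists_least_iff[of "\<lambda>e. branch_letter t b (a + e) \<noteq> branch_letter t b (a' + e)"] by blast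
  with aa' show ?thesis using that by blast
qed

text \<open>Loops beyond every depth can be chosen far apart, and pumping them embeds the Cantor space.\<close>
lemma uncountable_lang_from_loops:
  assumes run: "run_from A q t \<phi>" and acc: "accepting A \<phi>"
    and loops: "\<And>m. \<exists>a a' e. m \<le> a \<and> a < a' \<and> \<phi> (node b a) = \<phi> (node b a') \<and>
      (\<forall>k<e. branch_letter t b (a + k) = branch_letter t b (a' + k)) \<and>
      branch_letter t b (a + e) \<noteq> branch_letter t b (a' + e)"
    and off: "\<And>m. m0 \<le> m \<Longrightarrow> regular_tree K (subtree t (off_branch b m))"
    and depth: "\<And>p. \<exists>D. \<forall>s. (\<forall>u. length u < D \<longrightarrow> s u = subtree t (node b p) u) \<longrightarrow> \<not> regular_tree K s"
    and colour: "even c" "\<exists>\<^sub>\<infinity>m. color A (\<phi> (node b m)) = c" "\<And>m. m0 \<le> m \<Longrightarrow> color A (\<phi> (node b m)) \<le> c"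
  shows "uncountable (lang_from A q)"
proof -
  define loop where "loop m x \<longleftrightarrow> (case x of (a, a', e) \<Rightarrow> m \<le> a \<and> a < a' \<and>
      \<phi> (node b a) = \<phi> (node b a') \<and> (\<forall>k<e. branch_letter t b (a + k) = branch_letter t b (a' + k)) \<and>
      branch_letter t b (a + e) \<noteq> branch_letter t b (a' + e))" for m x
  have "\<forall>m. \<exists>x. loop m x" unfolding loop_def using loops by fastforce
  then obtain L where L: "\<And>m. loop m (L m)" using choice[of loop] by blast
  have "\<exists>D. \<forall>p s. (\<forall>u. length u < D p \<longrightarrow> s u = subtree t (node b p) u) \<longrightarrow> \<not> regular_tree K s"
    using depth by (rule choice[OF allI])
  then obtain D where D: "\<And>p s. (\<forall>u. length u < D p \<longrightarrow> s u = subtree t (node b p) u) \<Longrightarrow> \<not> regular_tree K s"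
    by blast
  define pos where "pos = rec_nat m0 (\<lambda>_ p. case L p of (a, a', e) \<Rightarrow> a' + e + D a' + 1)"
  define start where "start n = fst (L (pos n))" for n
  define stop where "stop n = fst (snd (L (pos n)))" for n
  define mismatch where "mismatch n = snd (snd (L (pos n)))" for n
  have loop_n: "loop (pos n) (start n, stop n, mismatch n)" for n
    using L[of "pos n"] unfolding start_def stop_def mismatch_def by simp
  have pos_Suc: "pos (Suc n) = stop n + mismatch n + D (stop n) + 1" for n
    unfolding pos_def stop_def mismatch_def by (simp split: prod.split)
  interpret pumping A q t \<phi> b start stop mismatch "\<lambda>n. D (stop n)" K c
  proof
    fix n
    show "start n < stop n" "\<phi> (node b (start n)) = \<phi> (node b (stop n))"
      "branch_letter t b (start n + mismatch n) \<noteq> branch_letter t b (stop n + mismatch n)"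
      "\<And>k. k < mismatch n \<Longrightarrow> branch_letter t b (start n + k) = branch_letter t b (stop n + k)"
      using loop_n[of n] unfolding loop_def by simp_all
    show "stop n + mismatch n + D (stop n) < start (Suc n)"
      using loop_n[of "Suc n"] pos_Suc[of n] unfolding loop_def by simp
  next
    have "m0 \<le> start 0" using loop_n[of 0] unfolding loop_def pos_def by simp
    then show "\<And>m. start 0 \<le> m \<Longrightarrow> regular_tree K (subtree t (off_branch b m))"
      "\<And>m. start 0 \<le> m \<Longrightarrow> color A (\<phi> (node b m)) \<le> c"
      using off colour(3) by simp_all
  qed (use run acc D colour in simp_all)
  show ?thesis by (rule uncountable_lang_from)
qed

theorem branch_reaches_regular_subtree:
  assumes wf: "wf_pta A" and run: "run_from A q t \<phi>" and acc: "accepting A \<phi>"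
    and q: "q \<in> states A" and countable: "countable (lang_from A q)"
  shows "\<exists>m. regular_tree (card (states A) + card (states A) * card (states A)) (subtree t (node b m))"
proof (rule ccontr)
  let ?k = "card (states A)"
  assume "\<nexists>m. regular_tree (?k + ?k * ?k) (subtree t (node b m))"
  then have not_regular: "\<And>m. \<not> regular_tree (?k + ?k * ?k) (subtree t (node b m))" by blast
  obtain m1 where off: "\<And>m. m1 \<le> m \<Longrightarrow> regular_tree ?k (subtree t (off_branch b m))"
    using finite_nat_bounded[OF finite_off_branch_not_regular[OF wf run acc q countable, of b]]
    by (metis (mono_tags, lifting) lessThan_iff mem_Collect_eq not_le subset_eq)
  obtain c N where colour: "even c" "\<exists>\<^sub>\<infinity>m. color A (\<phi> (node b m)) = c"
    "\<And>m. N \<le> m \<Longrightarrow> color A (\<phi> (node b m)) \<le> c"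
    using dominant_colour[OF wf run acc q, where b = b] by blast
  define m0 where "m0 = max m1 N"
  have "\<exists>a a' e. m \<le> a \<and> a < a' \<and> \<phi> (node b a) = \<phi> (node b a') \<and>
      (\<forall>k<e. branch_letter t b (a + k) = branch_letter t b (a' + k)) \<and>
      branch_letter t b (a + e) \<noteq> branch_letter t b (a' + e)" for m
  proof -
    have "\<And>m'. max m m1 \<le> m' \<Longrightarrow> regular_tree ?k (subtree t (off_branch b m'))" using off by simp
    then show ?thesis by (rule loop_with_mismatch[where m = "max m m1", OF wf run q _ not_regular]) auto
  qed
  moreover have "\<exists>D. \<forall>s. (\<forall>u. length u < D \<longrightarrow> s u = subtree t (node b p) u) \<longrightarrow> \<not> regular_tree ?k s" for p
  proof -
    have "\<not> regular_tree ?k (subtree t (node b p))"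
      using regular_tree_mono[OF le_add1] not_regular[of p] by blast
    then obtain D where "\<And>s. (\<forall>u. length u < D \<longrightarrow> s u = subtree t (node b p) u) \<Longrightarrow> \<not> regular_tree ?k s"
      by (rule not_regular_tree_witness_depth) blast
    then show ?thesis by blast
  qed
  moreover have "\<And>m. m0 \<le> m \<Longrightarrow> regular_tree ?k (subtree t (off_branch b m))"
    "\<And>m. m0 \<le> m \<Longrightarrow> color A (\<phi> (node b m)) \<le> c"
    using off colour(3) unfolding m0_def by simp_all
  ultimately have "uncountable (lang_from A q)"
    by (intro uncountable_lang_from_loops[OF run acc _ _ _ colour(1,2)])
  then show False using countable by simp
qed


section \<open>The unambiguous automaton\<close>

text \<open>A state \<open>Known s\<close> spells out a tree \<open>s\<close> with few subtrees; a state \<open>Typed T\<close> claims that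
  \<open>T\<close> is exactly the set of states of \<open>A\<close> accepting the current subtree, and is only allowed
  where the subtree is not of the first kind. Only typed states have odd colour.\<close>
datatype 'a bstate = is_Known: Known "'a tree" | is_Typed: Typed "nat set"

definition regular_bound :: "'a pta \<Rightarrow> nat" where
  "regular_bound A = card (states A) + card (states A) * card (states A)"

definition patterns :: "'a pta \<Rightarrow> 'a tree set" where
  "patterns A = {s. regular_tree (regular_bound A) s}"

definition bstates :: "'a pta \<Rightarrow> 'a bstate set" where
  "bstates A = Known ` patterns A \<union> Typed ` Pow (states A)"

definition accepting_states :: "'a pta \<Rightarrow> 'a tree \<Rightarrow> nat set" where
  "accepting_states A s = {q \<in> states A. s \<in> lang_from A q}"

definition claimed_states :: "'a pta \<Rightarrow> 'a bstate \<Rightarrow> nat set" where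
  "claimed_states A x = (case x of Known s \<Rightarrow> accepting_states A s | Typed T \<Rightarrow> T)"

definition pre_states :: "'a pta \<Rightarrow> 'a \<Rightarrow> nat set \<Rightarrow> nat set \<Rightarrow> nat set" where
  "pre_states A a T1 T2 = {q \<in> states A. \<exists>q1\<in>T1. \<exists>q2\<in>T2. (q, a, q1, q2) \<in> trans A}"

definition splits_pattern :: "'a pta \<Rightarrow> 'a \<Rightarrow> 'a bstate \<Rightarrow> 'a bstate \<Rightarrow> bool" where
  "splits_pattern A a y z \<longleftrightarrow>
     (\<exists>s\<in>patterns A. s [] = a \<and> y = Known (subtree s [Lft]) \<and> z = Known (subtree s [Rgt]))"

definition btrans :: "'a pta \<Rightarrow> ('a bstate \<times> 'a \<times> 'a bstate \<times> 'a bstate) set" where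
  "btrans A = {(x, a, y, z). x \<in> bstates A \<and> y \<in> bstates A \<and> z \<in> bstates A \<and>
     ((\<exists>s. x = Known s \<and> a = s [] \<and> y = Known (subtree s [Lft]) \<and> z = Known (subtree s [Rgt])) \<or>
      (\<exists>T. x = Typed T \<and> T = pre_states A a (claimed_states A y) (claimed_states A z) \<and>
           \<not> splits_pattern A a y z))}"

definition binit :: "'a pta \<Rightarrow> 'a bstate set" where
  "binit A = {Known s | s. s \<in> patterns A \<and> s \<in> lang A} \<union>
     {Typed T | T. T \<subseteq> states A \<and> T \<inter> initial A \<noteq> {}}"

definition encode :: "'a pta \<Rightarrow> 'a bstate \<Rightarrow> nat" where
  "encode A x = (case x of Known s \<Rightarrow> 2 * to_nat_on (patterns A) s | Typed T \<Rightarrow> 2 * set_encode T + 1)"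

definition unambiguous_pta :: "'a pta \<Rightarrow> 'a pta" where
  "unambiguous_pta A = \<lparr>states = encode A ` bstates A, initial = encode A ` binit A,
     trans = (\<lambda>(x, a, y, z). (encode A x, a, encode A y, encode A z)) ` btrans A,
     color = (\<lambda>n. n mod 2)\<rparr>"

lemma patterns_subtree: "s \<in> patterns A \<Longrightarrow> subtree s v \<in> patterns A"
  unfolding patterns_def using regular_tree_subtree by blast

lemma finite_patterns: "finite (patterns (A :: ('a::finite) pta))"
  unfolding patterns_def by (rule finite_regular_trees)

lemma inj_on_encode:
  assumes "finite (states A)"
  shows "inj_on (encode A) (bstates (A :: ('a::finite) pta))"
proof (rule inj_onI)
  fix x y assume x: "x \<in> bstates A" and y: "y \<in> bstates A" and eq: "encode A x = encode A y"
  have to_nat: "inj_on (to_nat_on (patterns A)) (patterns A)"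
    using finite_patterns by (intro inj_on_to_nat_on countable_finite)
  have "Pow (states A) \<subseteq> Collect finite" using assms by (auto intro: finite_subset)
  then have set_enc: "inj_on set_encode (Pow (states A))" by (rule inj_on_subset[OF inj_on_set_encode])
  show "x = y"
  proof (cases x; cases y)
    fix s s' assume "x = Known s" "y = Known s'"
    then show "x = y" using x y eq inj_onD[OF to_nat] by (auto simp: bstates_def encode_def)
  next
    fix T T' assume "x = Typed T" "y = Typed T'"
    then show "x = y" using x y eq inj_onD[OF set_enc] by (auto simp: bstates_def encode_def)
  qed (use eq in \<open>auto simp: encode_def, presburger+\<close>)
qed

lemma color_encode: "color (unambiguous_pta A) (encode A x) = (case x of Known s \<Rightarrow> 0 | Typed T \<Rightarrow> 1)"
  by (cases x) (simp_all add: unambiguous_pta_def encode_def)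

lemma wf_unambiguous_pta:
  assumes "finite (states A)"
  shows "wf_pta (unambiguous_pta (A :: ('a::finite) pta))"
proof -
  have "finite (bstates A)" unfolding bstates_def using finite_patterns[of A] assms by simp
  moreover have "binit A \<subseteq> bstates A"
    unfolding binit_def bstates_def patterns_def by auto
  ultimately show ?thesis
    unfolding wf_pta_def unambiguous_pta_def btrans_def by auto
qed

lemma accepting_states_children:
  assumes "wf_pta A"
  shows "accepting_states A s =
    pre_states A (s []) (accepting_states A (subtree s [Lft])) (accepting_states A (subtree s [Rgt]))"
  using lang_from_iff_children[of s A] assms
  unfolding accepting_states_def pre_states_def wf_pta_def by blast

definition canonical :: "'a pta \<Rightarrow> 'a tree \<Rightarrow> dir list \<Rightarrow> 'a bstate" where
  "canonical A t v = (if subtree t v \<in> patterns A then Known (subtree t v)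
     else Typed (accepting_states A (subtree t v)))"

lemma canonical_in_bstates: "canonical A t v \<in> bstates A"
  unfolding canonical_def bstates_def accepting_states_def by auto

lemma claimed_states_canonical: "claimed_states A (canonical A t v) = accepting_states A (subtree t v)"
  unfolding canonical_def claimed_states_def by auto

lemma not_splits_pattern_canonical:
  assumes "subtree t v \<notin> patterns A"
  shows "\<not> splits_pattern A (t v) (canonical A t (v @ [Lft])) (canonical A t (v @ [Rgt]))"
proof
  assume "splits_pattern A (t v) (canonical A t (v @ [Lft])) (canonical A t (v @ [Rgt]))"
  then obtain s where s: "s \<in> patterns A" "s [] = t v"
    "canonical A t (v @ [Lft]) = Known (subtree s [Lft])" "canonical A t (v @ [Rgt]) = Known (subtree s [Rgt])"
    unfolding splits_pattern_def by blast
  have "subtree t (v @ [d]) = subtree s [d]" if "canonical A t (v @ [d]) = Known (subtree s [d])" for d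
    using that unfolding canonical_def by (simp split: if_splits)
  then have children: "subtree (subtree t v) [d] = subtree s [d]" for d
    using s(3,4) by (cases d) simp_all
  have "subtree t v [] = s []" using s(2) by simp
  then have "subtree t v = s"
    using children[of Lft] children[of Rgt] by (rule tree_eq_if_root_children)
  then show False using assms s(1) by simp
qed

lemma canonical_in_btrans:
  assumes "wf_pta A"
  shows "(canonical A t v, t v, canonical A t (v @ [Lft]), canonical A t (v @ [Rgt])) \<in> btrans A"
proof (cases "subtree t v \<in> patterns A")
  case True
  then have "subtree (subtree t v) [d] \<in> patterns A" for d by (rule patterns_subtree)
  then have "canonical A t (v @ [d]) = Known (subtree (subtree t v) [d])"
    "Known (subtree (subtree t v) [d]) \<in> bstates A" for d
    unfolding canonical_def bstates_def by simp_all
  moreover have "canonical A t v = Known (subtree t v)" "Known (subtree t v) \<in> bstates A"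
    using True unfolding canonical_def bstates_def by simp_all
  ultimately show ?thesis unfolding btrans_def by simp
next
  case False
  have "canonical A t v = Typed (pre_states A (t v)
      (claimed_states A (canonical A t (v @ [Lft]))) (claimed_states A (canonical A t (v @ [Rgt]))))"
    using False accepting_states_children[OF assms, of "subtree t v"]
    unfolding claimed_states_canonical by (simp add: canonical_def)
  then show ?thesis
    using not_splits_pattern_canonical[OF False] canonical_in_bstates[of A t v]
      canonical_in_bstates[of A t "v @ [Lft]"] canonical_in_bstates[of A t "v @ [Rgt]"]
    unfolding btrans_def by auto
qed


lemma decode_run_from:
  assumes fin: "finite (states A)" and run: "run_from (unambiguous_pta A) r t \<rho>"
    and r: "r \<in> states (unambiguous_pta (A :: ('a::finite) pta))"
  obtains \<alpha> where "\<rho> = (\<lambda>v. encode A (\<alpha> v))" "\<And>v. (\<alpha> v, t v, \<alpha> (v @ [Lft]), \<alpha> (v @ [Rgt])) \<in> btrans A"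
proof
  define \<alpha> where "\<alpha> v = inv_into (bstates A) (encode A) (\<rho> v)" for v
  have inj: "inj_on (encode A) (bstates A)" by (rule inj_on_encode[OF fin])
  have "\<rho> v \<in> encode A ` bstates A" for v
    using run_from_in_states[OF wf_unambiguous_pta[OF fin] run r] by (simp add: unambiguous_pta_def)
  then have \<alpha>: "\<alpha> v \<in> bstates A" "\<rho> v = encode A (\<alpha> v)" for v
    unfolding \<alpha>_def by (simp_all add: inv_into_into f_inv_into_f)
  then show "\<rho> = (\<lambda>v. encode A (\<alpha> v))" by auto
  fix v
  have "(\<rho> v, t v, \<rho> (v @ [Lft]), \<rho> (v @ [Rgt])) \<in> trans (unambiguous_pta A)"
    using run unfolding run_from_def by blast
  then obtain x y z where "(x, t v, y, z) \<in> btrans A"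
    "\<rho> v = encode A x" "\<rho> (v @ [Lft]) = encode A y" "\<rho> (v @ [Rgt]) = encode A z"
    unfolding unambiguous_pta_def by auto
  moreover from this(1) have "x \<in> bstates A" "y \<in> bstates A" "z \<in> bstates A"
    unfolding btrans_def by auto
  ultimately show "(\<alpha> v, t v, \<alpha> (v @ [Lft]), \<alpha> (v @ [Rgt])) \<in> btrans A"
    using \<alpha> inj_onD[OF inj] by metis
qed

locale btrans_labelling =
  fixes A :: "'a pta" and t :: "'a tree" and \<alpha> :: "dir list \<Rightarrow> 'a bstate"
  assumes btrans: "\<And>v. (\<alpha> v, t v, \<alpha> (v @ [Lft]), \<alpha> (v @ [Rgt])) \<in> btrans A"
begin

lemma Known_child: "\<alpha> v = Known s \<Longrightarrow> \<alpha> (v @ [d]) = Known (subtree s [d])"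
  using btrans[of v] unfolding btrans_def by (cases d) auto

lemma subtree_if_Known: "\<alpha> v = Known s \<Longrightarrow> subtree t v = s"
proof -
  have "\<forall>v s. \<alpha> v = Known s \<longrightarrow> t (v @ u) = s u" for u
  proof (induction u)
    case Nil
    show ?case
    proof (intro allI impI)
      fix v s assume "\<alpha> v = Known s"
      then show "t (v @ []) = s []" using btrans[of v] unfolding btrans_def by auto
    qed
  next
    case (Cons d u)
    show ?case
    proof (intro allI impI)
      fix v s assume "\<alpha> v = Known s"
      then have "t ((v @ [d]) @ u) = subtree s [d] u" using Known_child Cons.IH by blast
      then show "t (v @ d # u) = s (d # u)" by (simp add: subtree_def)
    qed
  qed
  then show "\<alpha> v = Known s \<Longrightarrow> subtree t v = s" by (auto simp: subtree_def)
qed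

lemma wf_Typed_edges:
  assumes "accepting (unambiguous_pta A) (\<lambda>v. encode A (\<alpha> v))"
  shows "wf {(v @ [d], v) | v d. is_Typed (\<alpha> (v @ [d])) \<and> is_Typed (\<alpha> v)}"
    (is "wf ?E")
  unfolding wf_iff_no_infinite_down_chain
proof
  assume "\<exists>f. \<forall>i. (f (Suc i), f i) \<in> ?E"
  then obtain f where f: "\<And>i. (f (Suc i), f i) \<in> ?E" by blast
  define d where "d i = last (f (Suc i))" for i
  have f_Suc: "f (Suc i) = f i @ [d i]" and typed: "is_Typed (\<alpha> (f i))" for i
  proof -
    obtain v d' where "f (Suc i) = v @ [d']" "f i = v" "is_Typed (\<alpha> v)" using f[of i] by blast
    then show "f (Suc i) = f i @ [d i]" "is_Typed (\<alpha> (f i))" unfolding d_def by simp_all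
  qed
  have f_i: "f i = f 0 @ node d i" for i
    by (induction i) (simp_all add: f_Suc node_Suc)
  have node_b: "node (branch_through (f 0) d) (length (f 0) + i) = f i" for i
    unfolding node_branch_through using f_i[of i] by simp
  have "color (unambiguous_pta A) (encode A (\<alpha> (node (branch_through (f 0) d) n))) = 1"
    if "length (f 0) \<le> n" for n
  proof -
    have "node (branch_through (f 0) d) n = f (n - length (f 0))"
      using node_b[of "n - length (f 0)"] that by simp
    moreover have "is_Typed (\<alpha> (f (n - length (f 0))))" by (rule typed)
    ultimately show ?thesis by (cases "\<alpha> (f (n - length (f 0)))") (simp_all add: color_encode)
  qed
  then have "even_parity (\<lambda>n. color (unambiguous_pta A) (encode A (\<alpha> (node (branch_through (f 0) d) n))))
      \<longleftrightarrow> even (1::nat)"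
    by (intro even_parity_eventually_const) blast
  then show False using assms unfolding accepting_iff_even_parity by simp
qed

lemma eq_canonical_if_Known:
  assumes "\<alpha> v = Known s"
  shows "\<alpha> v = canonical A t v"
proof -
  have "s \<in> patterns A" using btrans[of v] assms unfolding btrans_def bstates_def by auto
  then show ?thesis using assms subtree_if_Known[OF assms] unfolding canonical_def by simp
qed

lemma eq_canonical_if_children:
  assumes wf: "wf_pta A" and v: "\<alpha> v = Typed T" and children: "\<And>d. \<alpha> (v @ [d]) = canonical A t (v @ [d])"
  shows "\<alpha> v = canonical A t v"
proof -
  have T: "T = pre_states A (t v) (accepting_states A (subtree t (v @ [Lft])))
      (accepting_states A (subtree t (v @ [Rgt])))"
    and no_split: "\<not> splits_pattern A (t v) (canonical A t (v @ [Lft])) (canonical A t (v @ [Rgt]))"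
    using btrans[of v] v by (auto simp: btrans_def children claimed_states_canonical)
  have "subtree t v \<notin> patterns A"
  proof
    assume pattern: "subtree t v \<in> patterns A"
    then have "canonical A t (v @ [d]) = Known (subtree (subtree t v) [d])" for d
      using patterns_subtree[OF pattern, of "[d]"] unfolding canonical_def by simp
    then have "splits_pattern A (t v) (canonical A t (v @ [Lft])) (canonical A t (v @ [Rgt]))"
      unfolding splits_pattern_def using pattern by (intro bexI[of _ "subtree t v"]) auto
    then show False using no_split by simp
  qed
  then show ?thesis
    using v T accepting_states_children[OF wf, of "subtree t v"] unfolding canonical_def by simp
qed

text \<open>By well-founded induction along typed nodes, which cannot form an infinite branch.\<close>
lemma eq_canonical:
  assumes wf: "wf_pta A" and acc: "accepting (unambiguous_pta A) (\<lambda>v. encode A (\<alpha> v))"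
  shows "\<alpha> v = canonical A t v"
proof -
  have "is_Typed (\<alpha> v) \<longrightarrow> \<alpha> v = canonical A t v"
  proof (induction v rule: wf_induct[OF wf_Typed_edges[OF acc]])
    case (1 v)
    show ?case
    proof
      assume typed: "is_Typed (\<alpha> v)"
      have "\<alpha> (v @ [d]) = canonical A t (v @ [d])" for d
        using 1[rule_format, of "v @ [d]"] typed eq_canonical_if_Known
        by (cases "\<alpha> (v @ [d])") auto
      then show "\<alpha> v = canonical A t v"
        using eq_canonical_if_children[OF wf] typed by (cases "\<alpha> v") auto
    qed
  qed
  then show ?thesis using eq_canonical_if_Known by (cases "\<alpha> v") auto
qed

end


lemma ACC_unambiguous_pta_subset:
  assumes wf: "wf_pta (A :: ('a::finite) pta)"
  shows "ACC (unambiguous_pta A) t \<subseteq> {\<lambda>v. encode A (canonical A t v)}"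
proof
  fix \<rho> assume "\<rho> \<in> ACC (unambiguous_pta A) t"
  then have run: "run_from (unambiguous_pta A) (\<rho> []) t \<rho>" and init: "\<rho> [] \<in> initial (unambiguous_pta A)"
    and acc: "accepting (unambiguous_pta A) \<rho>"
    unfolding ACC_def computation_iff_run_from by auto
  have fin: "finite (states A)" using wf unfolding wf_pta_def by simp
  have "\<rho> [] \<in> states (unambiguous_pta A)"
    using init wf_unambiguous_pta[OF fin] unfolding wf_pta_def by blast
  then obtain \<alpha> where \<rho>: "\<rho> = (\<lambda>v. encode A (\<alpha> v))"
    and btrans: "\<And>v. (\<alpha> v, t v, \<alpha> (v @ [Lft]), \<alpha> (v @ [Rgt])) \<in> btrans A"
    by (rule decode_run_from[OF fin run]) blast
  interpret btrans_labelling A t \<alpha> by unfold_locales (rule btrans)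
  have "\<alpha> = canonical A t" using eq_canonical[OF wf] acc \<rho> by blast
  then show "\<rho> \<in> {\<lambda>v. encode A (canonical A t v)}" using \<rho> by simp
qed

lemma lang_unambiguous_pta_subset:
  assumes wf: "wf_pta (A :: ('a::finite) pta)"
  shows "lang (unambiguous_pta A) \<subseteq> lang A"
proof
  fix t assume "t \<in> lang (unambiguous_pta A)"
  then obtain \<rho> where "\<rho> \<in> ACC (unambiguous_pta A) t" unfolding lang_def by blast
  moreover from this have "\<rho> [] \<in> initial (unambiguous_pta A)" unfolding ACC_def computation_def by simp
  ultimately obtain x where x: "x \<in> binit A" "encode A (canonical A t []) = encode A x"
    using ACC_unambiguous_pta_subset[OF wf] by (force simp: unambiguous_pta_def)
  have "finite (states A)" using wf unfolding wf_pta_def by simp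
  moreover have "x \<in> bstates A" using x(1) unfolding binit_def bstates_def patterns_def by auto
  ultimately have "canonical A t [] \<in> binit A"
    using x inj_on_encode canonical_in_bstates by (metis inj_onD)
  then show "t \<in> lang A"
    unfolding canonical_def binit_def accepting_states_def
    using lang_eq_UN_lang_from[of A] by (auto split: if_splits)
qed

lemma run_from_canonical:
  assumes "wf_pta A"
  shows "run_from (unambiguous_pta A) (encode A (canonical A t [])) t (\<lambda>v. encode A (canonical A t v))"
  unfolding run_from_def
proof (intro conjI allI)
  fix v
  show "(encode A (canonical A t v), t v, encode A (canonical A t (v @ [Lft])),
      encode A (canonical A t (v @ [Rgt]))) \<in> trans (unambiguous_pta A)"
    unfolding unambiguous_pta_def using canonical_in_btrans[OF assms, of t v]
    by (auto intro!: image_eqI[where x = "(canonical A t v, t v, canonical A t (v @ [Lft]), canonical A t (v @ [Rgt]))"])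
qed simp

lemma canonical_Nil_in_binit:
  assumes wf: "wf_pta A" and "t \<in> lang A"
  shows "canonical A t [] \<in> binit A"
proof (cases "t \<in> patterns A")
  case False
  obtain q where "q \<in> initial A" "t \<in> lang_from A q" using assms(2) lang_eq_UN_lang_from by blast
  moreover from this(1) have "q \<in> states A" using wf unfolding wf_pta_def by blast
  ultimately show ?thesis
    using False unfolding canonical_def binit_def accepting_states_def by auto
qed (use assms(2) in \<open>simp add: canonical_def binit_def\<close>)

text \<open>Every branch reaches a pattern by \<open>branch_reaches_regular_subtree\<close>, and from there on the
  canonical labelling has colour 0.\<close>
lemma accepting_canonical:
  assumes wf: "wf_pta A" and countable: "countable (lang A)" and t: "t \<in> lang A"
  shows "accepting (unambiguous_pta A) (\<lambda>v. encode A (canonical A t v))"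
  unfolding accepting_iff_even_parity
proof
  fix b
  obtain q \<phi> where q: "q \<in> initial A" and run: "run_from A q t \<phi>" and acc: "accepting A \<phi>"
    using t unfolding lang_eq_UN_lang_from lang_from_def by blast
  have "q \<in> states A" using q wf unfolding wf_pta_def by blast
  moreover have "countable (lang_from A q)"
    using countable_subset[OF _ countable] q lang_eq_UN_lang_from[of A] by blast
  ultimately obtain m where m: "subtree t (node b m) \<in> patterns A"
    using branch_reaches_regular_subtree[OF wf run acc] unfolding patterns_def regular_bound_def by blast
  have "color (unambiguous_pta A) (encode A (canonical A t (node b n))) = 0" if le: "m \<le> n" for n
  proof -
    obtain z where "subtree t (node b n) = subtree (subtree t (node b m)) z"
      using subtree_node_extends[OF le] by blast
    then have "subtree t (node b n) \<in> patterns A" using patterns_subtree[OF m] by simp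
    then show ?thesis unfolding canonical_def by (simp add: color_encode)
  qed
  then have "even_parity (\<lambda>n. color (unambiguous_pta A) (encode A (canonical A t (node b n))))
      \<longleftrightarrow> even (0::nat)"
    by (intro even_parity_eventually_const) blast
  then show "even_parity (\<lambda>n. color (unambiguous_pta A) (encode A (canonical A t (node b n))))"
    by simp
qed

lemma lang_subset_unambiguous_pta:
  assumes wf: "wf_pta (A :: ('a::finite) pta)" and countable: "countable (lang A)"
  shows "lang A \<subseteq> lang (unambiguous_pta A)"
proof
  fix t assume t: "t \<in> lang A"
  have "encode A (canonical A t []) \<in> initial (unambiguous_pta A)"
    using canonical_Nil_in_binit[OF wf t] by (simp add: unambiguous_pta_def)
  then have "(\<lambda>v. encode A (canonical A t v)) \<in> ACC (unambiguous_pta A) t"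
    using run_from_canonical[OF wf] accepting_canonical[OF wf countable t]
    unfolding ACC_def computation_iff_run_from by simp
  then show "t \<in> lang (unambiguous_pta A)" unfolding lang_def by blast
qed

theorem proposition8p1:
  fixes L :: "('a::finite) tree set"
  assumes "regular L" and "countable L"
  shows "unambiguous L"
proof -
  obtain A where wf: "wf_pta A" and L: "L = lang A" using assms(1) unfolding regular_def by blast
  have "L = lang (unambiguous_pta A)"
    using lang_unambiguous_pta_subset[OF wf] lang_subset_unambiguous_pta[OF wf] assms(2) L by blast
  moreover have "finite (ACC (unambiguous_pta A) t) \<and> card (ACC (unambiguous_pta A) t) \<le> 1" for t
    using ACC_unambiguous_pta_subset[OF wf, of t] card_mono[of "{_}"] finite_subset[of _ "{_}"] by fastforce
  moreover have "wf_pta (unambiguous_pta A)"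
    using wf wf_unambiguous_pta unfolding wf_pta_def by blast
  ultimately show ?thesis unfolding unambiguous_def by blast
qed

end
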